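(* The topology on $\mathrm{Aut}^*(X,\nu)$ induced from the weak operator topology on $\mathrm{Isom}(L^1(X,\nu))$ (the very weak topology) is not a group topology; more precisely, the multiplication map $\mathrm{Aut}^*(X,\nu)\times\mathrm{Aut}^*(X,\nu)\to\mathrm{Aut}^*(X,\nu)$ is not jointly continuous.
   Context: $(X,\nu)$ is a standard nonatomic Lebesgue probability space; $\mathrm{Aut}^*(X,\nu)$ is the group of invertible nonsingular transformations (those $T$ with $T_*\nu$ equivalent to $\nu$), identified when equal a.e. It embeds in $\mathrm{Isom}(L^1(X,\nu))$ via $T\mapsto U_{T,1}$, $U_{T,1}f=\frac{dT_*\nu}{d\nu}\cdot f\circ T^{-1}$. The weak operator topology on $\mathrm{Isom}(L^1)$: $U_n\to U$ iff $\int (U_nf)h\,d\nu\to\int(Uf)h\,d\nu$ for all $f\in L^1$, $h\in L^\infty$. *)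

theory Defs
  imports "HOL-Probability.Probability"
begin

text \<open>The standard nonatomic Lebesgue probability space, realised as [0,1] with Lebesgue measure.\<close>
definition nu01 :: "real measure" where
  "nu01 = restrict_space lborel {0..1}"

definition nonsing_aut :: "'a measure \<Rightarrow> ('a \<Rightarrow> 'a) set" where
  "nonsing_aut M = {T. bij_betw T (space M) (space M) \<and> T \<in> M \<rightarrow>\<^sub>M M
      \<and> inv_into (space M) T \<in> M \<rightarrow>\<^sub>M M
      \<and> (\<forall>A\<in>sets M. emeasure (distr M M T) A = 0 \<longleftrightarrow> emeasure M A = 0)}"

definition U_op :: "'a measure \<Rightarrow> ('a \<Rightarrow> 'a) \<Rightarrow> ('a \<Rightarrow> real) \<Rightarrow> 'a \<Rightarrow> real" where
  "U_op M T f x = enn2real (RN_deriv M (distr M M T) x) * f (inv_into (space M) T x)"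

definition Linfty :: "'a measure \<Rightarrow> ('a \<Rightarrow> real) set" where
  "Linfty M = {h. h \<in> borel_measurable M \<and> (\<exists>C. AE x in M. \<bar>h x\<bar> \<le> C)}"

definition wot_pairs :: "'a measure \<Rightarrow> (('a \<Rightarrow> real) \<times> ('a \<Rightarrow> real)) set" where
  "wot_pairs M = {(f, h). integrable M f \<and> h \<in> Linfty M}"

text \<open>The very weak topology: the topology on Aut*(X,nu) induced from the weak operator topology,
  i.e. the coarsest topology making all maps T |-> \<integral> (U_T f) h continuous.\<close>
definition very_weak_topology :: "'a measure \<Rightarrow> ('a \<Rightarrow> 'a) topology" where
  "very_weak_topology M =
     pullback_topology (nonsing_aut M)
       (\<lambda>T. restrict (\<lambda>(f, h). LINT x|M. U_op M T f x * h x) (wot_pairs M))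
       (product_topology (\<lambda>_. euclideanreal) (wot_pairs M))"

end

theory Submission
  imports Defs
begin

text \<open>Suppose composition were jointly continuous at \<open>(id, id)\<close>. Take \<open>A = [0, 1/2]\<close> and the
  very weak open set \<open>V\<close> of those \<open>R\<close> with \<open>\<integral> (U_R 1_A) 1_A = \<nu>(A \<inter> R\<^sup>-\<^sup>1 A) > 1/4\<close>,
  which contains \<open>id\<close>. Very weak neighbourhoods of the identity contain all \<open>R\<close> that carry only a
  set of small measure across the boundaries of finitely many given Borel sets (approximate the
  \<open>L\<^sup>\<infinity>\<close> test function by a step function and use absolute continuity of \<open>\<integral>\<bar>f\<bar>\<close>). For
  any such finite family we construct \<open>S\<close> and \<open>T\<close> that both move little: \<open>S\<close> swaps the two halves
  of the set \<open>E\<close> formed by the initial \<open>1/K\<close>-parts of the dyadic intervals of length \<open>2\<^sup>-\<^sup>n\<close>,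
  which has measure \<open>1/K\<close>; \<open>T\<close> maps every such dyadic interval onto itself but pushes half of
  the mass into \<open>E\<close>, and the given sets are, up to small measure, unions of dyadic intervals.
  Yet \<open>S \<circ> T\<close> sends all of \<open>A\<close> except a set of measure \<open>\<le> 1/4\<close> out of \<open>A\<close>, so \<open>S \<circ> T \<notin> V\<close>.\<close>

section \<open>Nonsingular transformations and the very weak topology\<close>

lemma nonsing_autD:
  assumes "R \<in> nonsing_aut M"
  shows "bij_betw R (space M) (space M)" "R \<in> M \<rightarrow>\<^sub>M M"
    "inv_into (space M) R \<in> M \<rightarrow>\<^sub>M M"
    "\<And>A. A \<in> sets M \<Longrightarrow> emeasure (distr M M R) A = 0 \<longleftrightarrow> emeasure M A = 0"
  using assms by (auto simp: nonsing_aut_def)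

lemma id_in_nonsing_aut: "id \<in> nonsing_aut M"
  unfolding nonsing_aut_def
proof (intro CollectI conjI ballI)
  show "inv_into (space M) id \<in> M \<rightarrow>\<^sub>M M"
    by (subst measurable_cong[where g="\<lambda>x. x"]) (auto intro: inv_into_f_eq)
  show "bij_betw id (space M) (space M)" by simp
qed (simp_all add: id_def distr_id)

lemma AE_nonsing_aut_comp:
  assumes R: "R \<in> nonsing_aut M" and ae: "AE x in M. P x"
  shows "AE x in M. P (R x)"
proof -
  obtain N where N: "{x\<in>space M. \<not> P x} \<subseteq> N" "N \<in> sets M" "emeasure M N = 0"
    using ae by (auto simp: eventually_ae_filter)
  have "emeasure (distr M M R) N = 0" using nonsing_autD(4)[OF R N(2)] N(3) by simp
  then have "emeasure M (R -` N \<inter> space M) = 0"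
    using nonsing_autD(2)[OF R] N(2) by (simp add: emeasure_distr)
  moreover have "R -` N \<inter> space M \<in> sets M" using nonsing_autD(2)[OF R] N(2) by measurable
  moreover have "{x\<in>space M. \<not> P (R x)} \<subseteq> R -` N \<inter> space M"
    using N(1) nonsing_autD(2)[OF R] by (auto simp: measurable_def)
  ultimately show ?thesis unfolding eventually_ae_filter null_sets_def by blast
qed

text \<open>Change of variables: the Radon--Nikodym factor in \<open>U_op\<close> exactly compensates
  the substitution \<open>x = R y\<close>.\<close>
lemma (in finite_measure) integral_U_op:
  assumes R: "R \<in> nonsing_aut M" and f: "integrable M f" and h: "h \<in> borel_measurable M"
  shows "(LINT x|M. U_op M R f x * h x) = (LINT x|M. f x * h (R x))"
proof -
  let ?N = "distr M M R"
  let ?r = "RN_deriv M ?N"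
  let ?i = "inv_into (space M) R"
  have Rm: "R \<in> M \<rightarrow>\<^sub>M M" and im: "?i \<in> M \<rightarrow>\<^sub>M M" and bij: "bij_betw R (space M) (space M)"
    using nonsing_autD[OF R] by auto
  have sN: "sets ?N = sets M" by simp
  have ac: "absolutely_continuous M ?N"
    unfolding absolutely_continuous_def
    using nonsing_autD(4)[OF R] by (auto simp: null_sets_def)
  have "AE x in M. ?r x \<noteq> \<infinity>"
    using finite_measure_distr[OF Rm] finite_measure.sigma_finite_measure
    by (intro RN_deriv_finite[OF _ ac sN]) auto
  then have "density M (\<lambda>x. ennreal (enn2real (?r x))) = density M ?r"
    by (intro density_cong) (auto simp: less_top[symmetric] intro: ennreal_enn2real)
  then have dens: "density M (\<lambda>x. ennreal (enn2real (?r x))) = ?N"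
    using density_RN_deriv[OF ac sN] by simp
  define g where "g y = f (?i y) * h y" for y
  have gm: "g \<in> borel_measurable M" unfolding g_def
    using f h im by measurable
  have "(LINT x|M. U_op M R f x * h x) = (LINT y|M. enn2real (?r y) *\<^sub>R g y)"
    by (simp add: U_op_def g_def mult.assoc)
  also have "\<dots> = (LINT y|?N. g y)"
    by (subst dens[symmetric], rule integral_density[symmetric]) (use gm in auto)
  also have "\<dots> = (LINT x|M. g (R x))"
    by (rule integral_distr[OF Rm gm])
  also have "\<dots> = (LINT x|M. f x * h (R x))"
    by (rule Bochner_Integration.integral_cong)
       (use bij in \<open>auto simp: g_def inv_into_f_f bij_betw_def\<close>)
  finally show ?thesis .
qed

definition wot_functional :: "'a measure \<Rightarrow> ('a \<Rightarrow> 'a) \<Rightarrow> ('a \<Rightarrow> real) \<times> ('a \<Rightarrow> real) \<Rightarrow> real" where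
  "wot_functional M R = (\<lambda>(f, h). LINT x|M. U_op M R f x * h x)"

lemma very_weak_topology_eq:
  "very_weak_topology M =
     pullback_topology (nonsing_aut M) (\<lambda>R. restrict (wot_functional M R) (wot_pairs M))
       (product_topology (\<lambda>_. euclideanreal) (wot_pairs M))"
  unfolding very_weak_topology_def wot_functional_def ..

lemma topspace_very_weak_topology: "topspace (very_weak_topology M) = nonsing_aut M"
  unfolding very_weak_topology_eq topspace_pullback_topology by auto

lemma (in finite_measure) wot_functional_eq:
  assumes "R \<in> nonsing_aut M" "(f, h) \<in> wot_pairs M"
  shows "wot_functional M R (f, h) = (LINT x|M. f x * h (R x))"
  using assms integral_U_op[of R f h] by (simp add: wot_functional_def wot_pairs_def Linfty_def)

lemma openin_very_weak_topology_vimage: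
  assumes p: "p \<in> wot_pairs M" and S: "open S"
  shows "openin (very_weak_topology M) {R \<in> nonsing_aut M. wot_functional M R p \<in> S}"
proof -
  let ?P = "product_topology (\<lambda>_. euclideanreal) (wot_pairs M)"
  let ?Z = "{z \<in> topspace ?P. z p \<in> S}"
  have "openin ?P ?Z"
    using S by (intro openin_continuous_map_preimage[OF continuous_map_product_projection[OF p]]) auto
  moreover have "{R \<in> nonsing_aut M. wot_functional M R p \<in> S} =
      (\<lambda>R. restrict (wot_functional M R) (wot_pairs M)) -` ?Z \<inter> nonsing_aut M"
    using p by auto
  ultimately show ?thesis unfolding very_weak_topology_eq openin_pullback_topology by blast
qed

lemma openin_very_weak_topologyE:
  assumes U: "openin (very_weak_topology M) U" and R0: "R0 \<in> U"
  obtains J d where "finite J" "J \<subseteq> wot_pairs M" "d > 0"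
    "\<And>R. R \<in> nonsing_aut M \<Longrightarrow> (\<forall>p\<in>J. \<bar>wot_functional M R p - wot_functional M R0 p\<bar> < d) \<Longrightarrow> R \<in> U"
proof -
  let ?W = "wot_pairs M"
  let ?\<Phi> = "wot_functional M"
  let ?F = "\<lambda>R. restrict (?\<Phi> R) ?W"
  obtain Ob where O: "openin (product_topology (\<lambda>_. euclideanreal) ?W) Ob"
    and UO: "U = ?F -` Ob \<inter> nonsing_aut M"
    using U unfolding very_weak_topology_eq openin_pullback_topology by blast
  have FO: "?F R0 \<in> Ob" using R0 UO by blast
  obtain V where fin: "finite {i \<in> ?W. V i \<noteq> topspace euclideanreal}"
    and op: "\<forall>i\<in>?W. openin euclideanreal (V i)"
    and inV: "?F R0 \<in> Pi\<^sub>E ?W V" and VO: "Pi\<^sub>E ?W V \<subseteq> Ob"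
    using O FO unfolding openin_product_topology_alt by blast
  define J where "J = {i \<in> ?W. V i \<noteq> topspace euclideanreal}"
  have "\<forall>i\<in>J. \<exists>e>0. ball (?\<Phi> R0 i) e \<subseteq> V i"
    using op inV by (auto simp: J_def PiE_iff open_contains_ball)
  then obtain e where e: "\<And>i. i \<in> J \<Longrightarrow> e i > 0 \<and> ball (?\<Phi> R0 i) (e i) \<subseteq> V i" by metis
  define d where "d = Min (insert 1 (e ` J))"
  have finJ: "finite J" using fin by (simp add: J_def)
  have dle: "d \<le> e i" if "i \<in> J" for i unfolding d_def using finJ that by (auto intro: Min_le)
  show thesis
  proof
    show "finite J" by (rule finJ)
    show "J \<subseteq> ?W" by (auto simp: J_def)
    show "d > 0" unfolding d_def using finJ e by (auto simp: Min_gr_iff)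
    fix R assume Rn: "R \<in> nonsing_aut M" and close: "\<forall>p\<in>J. \<bar>?\<Phi> R p - ?\<Phi> R0 p\<bar> < d"
    have "?F R i \<in> V i" if i: "i \<in> ?W" for i
    proof (cases "i \<in> J")
      case True
      then have "?\<Phi> R i \<in> ball (?\<Phi> R0 i) (e i)"
        using close dle[OF True] by (fastforce simp: dist_real_def abs_minus_commute)
      then show ?thesis using e[OF True] i by auto
    qed (use i in \<open>simp add: J_def\<close>)
    then have "?F R \<in> Ob" using VO by (auto intro!: PiE_I)
    then show "R \<in> U" using Rn UO by simp
  qed
qed

text \<open>Small displacement sets describe the very weak neighbourhoods of the identity.\<close>
definition displacement :: "'a measure \<Rightarrow> ('a \<Rightarrow> 'a) \<Rightarrow> 'a set set \<Rightarrow> 'a set" where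
  "displacement M R BB = (\<Union>B\<in>BB. {x\<in>space M. (R x \<in> B) \<noteq> (x \<in> B)})"

lemma displacement_mono: "BB \<subseteq> BB' \<Longrightarrow> displacement M R BB \<subseteq> displacement M R BB'"
  unfolding displacement_def by blast

lemma sets_displacement:
  assumes R: "R \<in> M \<rightarrow>\<^sub>M M" and BB: "finite BB" "BB \<subseteq> sets M"
  shows "displacement M R BB \<in> sets M"
  unfolding displacement_def using BB R by (intro sets.finite_UN) (auto intro!: pred_intros_logic)

section \<open>Very weak neighbourhoods of the identity\<close>

lemma integral_abs_excess_LIMSEQ:
  fixes f :: "'a \<Rightarrow> real"
  assumes f: "integrable M f"
  shows "(\<lambda>N::nat. LINT x|M. \<bar>f x\<bar> - min \<bar>f x\<bar> (real N)) \<longlonglongrightarrow> 0"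
proof -
  have fm[measurable]: "f \<in> borel_measurable M" using f by auto
  define s where "s N x = \<bar>f x\<bar> - min \<bar>f x\<bar> (real N)" for N x
  have [measurable]: "s N \<in> borel_measurable M" for N unfolding s_def by measurable
  have "(\<lambda>N. integral\<^sup>L M (s N)) \<longlonglongrightarrow> integral\<^sup>L M (\<lambda>x. 0)"
  proof (rule integral_dominated_convergence[where w="\<lambda>x. \<bar>f x\<bar>"])
    show "AE x in M. (\<lambda>N. s N x) \<longlonglongrightarrow> 0"
    proof (rule AE_I2)
      fix x
      obtain N :: nat where N: "\<bar>f x\<bar> \<le> real N" using real_arch_simple by blast
      have "eventually (\<lambda>n. s n x = 0) sequentially"
        unfolding eventually_sequentially
        by (rule exI[of _ N]) (use N in \<open>auto simp: s_def min_def\<close>)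
      then show "(\<lambda>N. s N x) \<longlonglongrightarrow> 0" by (rule tendsto_eventually)
    qed
    show "integrable M (\<lambda>x. \<bar>f x\<bar>)" using f by auto
    show "AE x in M. norm (s N x) \<le> \<bar>f x\<bar>" for N by (auto simp: s_def min_def)
  qed auto
  then show ?thesis unfolding s_def by simp
qed

text \<open>Absolute continuity of \<open>\<integral>\<bar>f\<bar>\<close>: the part of \<open>\<bar>f\<bar>\<close> above a suitable level \<open>N\<close> has small
  integral, and on a set of measure \<open>< d\<close> the part below \<open>N\<close> contributes at most \<open>N d\<close>.\<close>
lemma (in finite_measure) integral_indicator_abs_small:
  fixes f :: "'a \<Rightarrow> real"
  assumes f: "integrable M f" and e: "e > 0"
  obtains d where "d > 0"
    "\<And>Z. Z \<in> sets M \<Longrightarrow> measure M Z < d \<Longrightarrow> (LINT x|M. indicator Z x * \<bar>f x\<bar>) < e"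
proof -
  have fm[measurable]: "f \<in> borel_measurable M" using f by auto
  define s where "s N x = \<bar>f x\<bar> - min \<bar>f x\<bar> (real N)" for N x
  have [measurable]: "s N \<in> borel_measurable M" for N unfolding s_def by measurable
  have "eventually (\<lambda>N. integral\<^sup>L M (s N) < e/2) sequentially"
    using integral_abs_excess_LIMSEQ[OF f] e unfolding s_def by (intro order_tendstoD(2)) auto
  then obtain N where N: "integral\<^sup>L M (s N) < e/2"
    unfolding eventually_sequentially by blast
  have si: "integrable M (s N)"
    by (rule Bochner_Integration.integrable_bound[OF integrable_abs[OF f]]) (auto simp: s_def min_def)
  define d where "d = e / (2 * (real N + 1))"
  show thesis
  proof
    show d: "d > 0" using e by (simp add: d_def)
    fix Z assume Z: "Z \<in> sets M" and mZ: "measure M Z < d"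
    have iZ: "integrable M (\<lambda>x. indicator Z x * real N)"
      using Z by (intro integrable_mult_left integrable_real_indicator) (auto simp: less_top[symmetric])
    have "(LINT x|M. indicator Z x * \<bar>f x\<bar>) \<le> (LINT x|M. s N x + indicator Z x * real N)"
    proof (rule integral_mono)
      show "integrable M (\<lambda>x. indicator Z x * \<bar>f x\<bar>)"
        by (rule Bochner_Integration.integrable_bound[OF integrable_abs[OF f]])
           (use Z in \<open>auto simp: indicator_def\<close>)
      show "integrable M (\<lambda>x. s N x + indicator Z x * real N)" using si iZ by auto
    qed (auto simp: s_def indicator_def min_def)
    also have "\<dots> = integral\<^sup>L M (s N) + measure M Z * real N"
      using si iZ Z sets.sets_into_space[OF Z] by (simp add: Int_absorb2)
    also have "\<dots> < e/2 + d * (real N + 1)"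
    proof -
      have "measure M Z * real N \<le> d * (real N + 1)"
        using mZ d by (intro mult_mono) auto
      then show ?thesis using N by linarith
    qed
    also have "\<dots> = e" unfolding d_def by (simp add: field_simps)
    finally show "(LINT x|M. indicator Z x * \<bar>f x\<bar>) < e" .
  qed
qed

lemma Linfty_bounded_representative:
  assumes "h \<in> Linfty M"
  obtains g C where "g \<in> borel_measurable M" "C \<ge> 0" "\<And>x. \<bar>g x\<bar> \<le> C" "AE x in M. h x = g x"
proof -
  obtain C0 where hm: "h \<in> borel_measurable M" and C0: "AE x in M. \<bar>h x\<bar> \<le> C0"
    using assms by (auto simp: Linfty_def)
  define C where "C = max C0 0"
  show thesis
  proof (rule that[of "\<lambda>x. max (-C) (min C (h x))" C])
    show "(\<lambda>x. max (-C) (min C (h x))) \<in> borel_measurable M" using hm by measurable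
    show "AE x in M. h x = max (-C) (min C (h x))" using C0 by eventually_elim (auto simp: C_def)
  qed (auto simp: C_def)
qed

text \<open>Quantising \<open>g\<close> in steps of \<open>1/m\<close>: off the displacement set of its level sets, \<open>g \<circ> R\<close>
  and \<open>g\<close> fall in the same step.\<close>
lemma bounded_function_displacement_bound:
  fixes g :: "'a \<Rightarrow> real"
  assumes g: "g \<in> borel_measurable M" and C: "\<And>x. \<bar>g x\<bar> \<le> C" and m: "m > 0"
  obtains BB where "finite BB" "BB \<subseteq> sets M"
    "\<And>R x. x \<in> space M \<Longrightarrow> \<bar>g (R x) - g x\<bar> \<le> 1 / m + 2 * C * indicator (displacement M R BB) x"
proof
  define N where "N = \<lceil>m * C\<rceil> + 1"
  define B where "B i = {x\<in>space M. of_int i \<le> m * g x \<and> m * g x < of_int i + 1}" for i :: int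
  show "finite (B ` {-N..N})" by simp
  show "B ` {-N..N} \<subseteq> sets M" using g by (auto simp: B_def)
  fix R x assume x: "x \<in> space M"
  show "\<bar>g (R x) - g x\<bar> \<le> 1 / m + 2 * C * indicator (displacement M R (B ` {-N..N})) x"
  proof (cases "x \<in> displacement M R (B ` {-N..N})")
    case True
    have "\<bar>g (R x) - g x\<bar> \<le> 0 + 2 * C * 1" using C[of x] C[of "R x"] by (simp add: abs_le_iff)
    also have "\<dots> \<le> 1 / m + 2 * C * indicator (displacement M R (B ` {-N..N})) x"
      using True m by simp
    finally show ?thesis .
  next
    case False
    define i where "i = \<lfloor>m * g x\<rfloor>"
    have i: "of_int i \<le> m * g x" "m * g x < of_int i + 1" unfolding i_def by linarith+
    have "\<bar>m * g x\<bar> \<le> m * C" using C[of x] m by (simp add: abs_mult)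
    then have "- (m * C) \<le> m * g x" "m * g x \<le> m * C" by (auto simp: abs_le_iff)
    then have "- of_int \<lceil>m * C\<rceil> - 1 \<le> (of_int i :: real)" "(of_int i :: real) \<le> of_int \<lceil>m * C\<rceil> + 1"
      using i le_of_int_ceiling[of "m * C"] by linarith+
    then have "i \<in> {-N..N}" by (simp add: N_def)
    moreover have "x \<in> B i" using x i by (auto simp: B_def)
    ultimately have "R x \<in> B i" using False x unfolding displacement_def by blast
    then have "\<bar>m * g (R x) - m * g x\<bar> < 1" using i by (auto simp: B_def)
    then have "m * \<bar>g (R x) - g x\<bar> < 1" using m by (simp add: right_diff_distrib[symmetric] abs_mult)
    then show ?thesis using False m by (simp add: field_simps)
  qed
qed

lemma integral_comp_diff_bound:
  fixes f g :: "'a \<Rightarrow> real"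
  assumes f: "integrable M f" and g: "g \<in> borel_measurable M" and C: "\<And>x. \<bar>g x\<bar> \<le> C"
    and R: "R \<in> M \<rightarrow>\<^sub>M M" and Z: "Z \<in> sets M"
    and bound: "\<And>x. x \<in> space M \<Longrightarrow> \<bar>g (R x) - g x\<bar> \<le> a + b * indicator Z x"
  shows "\<bar>(LINT x|M. f x * g (R x)) - (LINT x|M. f x * g x)\<bar>
    \<le> a * (LINT x|M. \<bar>f x\<bar>) + b * (LINT x|M. indicator Z x * \<bar>f x\<bar>)"
proof -
  have [measurable]: "f \<in> borel_measurable M" "Z \<in> sets M" using f Z by auto
  have "C \<ge> 0" using C by (meson abs_ge_zero order_trans)
  then have gC: "norm (f x * g y) \<le> norm (C * f x)" for x y
    using mult_left_mono[OF C[of y], of "\<bar>f x\<bar>"] by (simp add: abs_mult mult.commute)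
  have i1: "integrable M (\<lambda>x. f x * g (R x))" and i2: "integrable M (\<lambda>x. f x * g x)"
    by (rule Bochner_Integration.integrable_bound[where f="\<lambda>x. C * f x"], use f g R gC in auto)+
  have iZ: "integrable M (\<lambda>x. indicator Z x * \<bar>f x\<bar>)"
    by (rule Bochner_Integration.integrable_bound[OF integrable_abs[OF f]])
       (use Z in \<open>auto simp: indicator_def\<close>)
  have "\<bar>(LINT x|M. f x * g (R x)) - (LINT x|M. f x * g x)\<bar> = \<bar>LINT x|M. f x * (g (R x) - g x)\<bar>"
    using i1 i2 by (simp add: right_diff_distrib)
  also have "\<dots> \<le> (LINT x|M. \<bar>f x * (g (R x) - g x)\<bar>)"
    by (rule integral_abs_bound)
  also have "\<dots> \<le> (LINT x|M. a * \<bar>f x\<bar> + b * (indicator Z x * \<bar>f x\<bar>))"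
  proof (rule integral_mono)
    fix x assume "x \<in> space M"
    then have "\<bar>f x\<bar> * \<bar>g (R x) - g x\<bar> \<le> \<bar>f x\<bar> * (a + b * indicator Z x)"
      using bound by (intro mult_left_mono) auto
    also have "\<dots> = a * \<bar>f x\<bar> + b * (indicator Z x * \<bar>f x\<bar>)" by (simp add: algebra_simps)
    finally show "\<bar>f x * (g (R x) - g x)\<bar> \<le> a * \<bar>f x\<bar> + b * (indicator Z x * \<bar>f x\<bar>)"
      by (simp only: abs_mult)
  qed (use i1 i2 f iZ in \<open>auto simp: right_diff_distrib\<close>)
  also have "\<dots> = a * (LINT x|M. \<bar>f x\<bar>) + b * (LINT x|M. indicator Z x * \<bar>f x\<bar>)"
    using f iZ by simp
  finally show ?thesis .
qed

lemma (in finite_measure) integral_comp_near_id: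
  fixes f h :: "'a \<Rightarrow> real"
  assumes f: "integrable M f" and h: "h \<in> Linfty M" and e: "e > 0"
  obtains BB d where "finite BB" "BB \<subseteq> sets M" "d > 0"
    "\<And>R. R \<in> nonsing_aut M \<Longrightarrow> measure M (displacement M R BB) < d \<Longrightarrow>
       \<bar>(LINT x|M. f x * h (R x)) - (LINT x|M. f x * h x)\<bar> < e"
proof -
  obtain g C where g: "g \<in> borel_measurable M" and C: "C \<ge> 0" "\<And>x. \<bar>g x\<bar> \<le> C"
    and hg: "AE x in M. h x = g x"
    using Linfty_bounded_representative[OF h] by metis
  define nf where "nf = (LINT x|M. \<bar>f x\<bar>)"
  have nf: "nf \<ge> 0" unfolding nf_def by auto
  define m where "m = 2 * (nf + 1) / e"
  have m: "m > 0" and nfm: "1 / m * nf < e / 2"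
    using e nf by (auto simp: m_def field_simps)
  obtain BB where BB: "finite BB" "BB \<subseteq> sets M" and
    step: "\<And>R x. x \<in> space M \<Longrightarrow> \<bar>g (R x) - g x\<bar> \<le> 1 / m + 2 * C * indicator (displacement M R BB) x"
    using bounded_function_displacement_bound[OF g C(2) m] by metis
  obtain d where d: "d > 0" and small: "\<And>Z. Z \<in> sets M \<Longrightarrow> measure M Z < d \<Longrightarrow>
      (LINT x|M. indicator Z x * \<bar>f x\<bar>) < e / (2 * (2 * C + 1))"
    using integral_indicator_abs_small[OF f, of "e / (2 * (2 * C + 1))"] e C by auto
  show thesis
  proof (rule that[OF BB d])
    fix R assume R: "R \<in> nonsing_aut M" and mR: "measure M (displacement M R BB) < d"
    let ?Z = "displacement M R BB"
    have Rm: "R \<in> M \<rightarrow>\<^sub>M M" using nonsing_autD(2)[OF R] .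
    have [measurable]: "f \<in> borel_measurable M" "h \<in> borel_measurable M" "g \<in> borel_measurable M"
      "R \<in> M \<rightarrow>\<^sub>M M"
      using f h g Rm by (auto simp: Linfty_def)
    have "AE x in M. f x * h (R x) = f x * g (R x)"
      using AE_nonsing_aut_comp[OF R hg] by eventually_elim simp
    then have "(LINT x|M. f x * h (R x)) = (LINT x|M. f x * g (R x))"
      by (rule integral_cong_AE[rotated 2]) measurable
    moreover have "AE x in M. f x * h x = f x * g x"
      using hg by eventually_elim simp
    then have "(LINT x|M. f x * h x) = (LINT x|M. f x * g x)"
      by (rule integral_cong_AE[rotated 2]) measurable
    moreover have "2 * C * (LINT x|M. indicator ?Z x * \<bar>f x\<bar>) \<le> 2 * C * (e / (2 * (2 * C + 1)))"
      using small[OF sets_displacement[OF Rm BB] mR] C by (intro mult_left_mono) auto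
    moreover have "2 * C * (e / (2 * (2 * C + 1))) < e / 2"
      using C e by (simp add: field_simps)
    ultimately show "\<bar>(LINT x|M. f x * h (R x)) - (LINT x|M. f x * h x)\<bar> < e"
      using integral_comp_diff_bound[OF f g C(2) Rm sets_displacement[OF Rm BB] step] nfm
      unfolding nf_def by linarith
  qed
qed

lemma (in finite_measure) very_weak_nhds_id:
  assumes U: "openin (very_weak_topology M) U" and id: "id \<in> U"
  obtains BB d where "finite BB" "BB \<subseteq> sets M" "d > 0"
    "\<And>R. R \<in> nonsing_aut M \<Longrightarrow> measure M (displacement M R BB) < d \<Longrightarrow> R \<in> U"
proof -
  obtain J e where J: "finite J" "J \<subseteq> wot_pairs M" and e: "e > 0" and JU:
    "\<And>R. R \<in> nonsing_aut M \<Longrightarrow> (\<forall>p\<in>J. \<bar>wot_functional M R p - wot_functional M id p\<bar> < e) \<Longrightarrow> R \<in> U"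
    using openin_very_weak_topologyE[OF U id] by metis
  have "\<forall>p\<in>J. \<exists>BB d. finite BB \<and> BB \<subseteq> sets M \<and> d > 0 \<and> (\<forall>R\<in>nonsing_aut M.
      measure M (displacement M R BB) < d \<longrightarrow> \<bar>wot_functional M R p - wot_functional M id p\<bar> < e)"
  proof
    fix p assume "p \<in> J"
    then obtain f h where p: "p = (f, h)" and fh: "(f, h) \<in> wot_pairs M" using J by (cases p) auto
    then have "integrable M f" "h \<in> Linfty M" by (auto simp: wot_pairs_def)
    then obtain BB d where "finite BB" "BB \<subseteq> sets M" "d > 0" and near: "\<And>R. R \<in> nonsing_aut M \<Longrightarrow>
        measure M (displacement M R BB) < d \<Longrightarrow> \<bar>(LINT x|M. f x * h (R x)) - (LINT x|M. f x * h x)\<bar> < e"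
      using integral_comp_near_id[OF _ _ e] by blast
    then show "\<exists>BB d. finite BB \<and> BB \<subseteq> sets M \<and> d > 0 \<and>
      (\<forall>R\<in>nonsing_aut M. measure M (displacement M R BB) < d \<longrightarrow>
         \<bar>wot_functional M R p - wot_functional M id p\<bar> < e)"
      using wot_functional_eq[OF _ fh] wot_functional_eq[OF id_in_nonsing_aut fh] unfolding p by auto
  qed
  then obtain BBp dp where BBp: "\<And>p. p \<in> J \<Longrightarrow> finite (BBp p) \<and> BBp p \<subseteq> sets M \<and> dp p > 0 \<and>
      (\<forall>R\<in>nonsing_aut M. measure M (displacement M R (BBp p)) < dp p \<longrightarrow>
         \<bar>wot_functional M R p - wot_functional M id p\<bar> < e)"
    by metis
  define BB where "BB = (\<Union>p\<in>J. BBp p)"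
  define d where "d = Min (insert 1 (dp ` J))"
  have BB: "finite BB" "BB \<subseteq> sets M" unfolding BB_def using BBp J by auto
  show thesis
  proof (rule that[OF BB])
    show "d > 0" unfolding d_def using J BBp by (auto simp: Min_gr_iff)
    fix R assume R: "R \<in> nonsing_aut M" and mR: "measure M (displacement M R BB) < d"
    have "\<bar>wot_functional M R p - wot_functional M id p\<bar> < e" if p: "p \<in> J" for p
    proof -
      have "displacement M R (BBp p) \<subseteq> displacement M R BB"
        unfolding BB_def using p by (intro displacement_mono) auto
      then have "measure M (displacement M R (BBp p)) \<le> measure M (displacement M R BB)"
        using sets_displacement[OF nonsing_autD(2)[OF R] BB] by (intro finite_measure_mono)
      also have "\<dots> < dp p"
        using mR Min_le[of "insert 1 (dp ` J)" "dp p"] p J unfolding d_def by simp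
      finally show ?thesis using BBp[OF p] R by blast
    qed
    then show "R \<in> U" using JU[OF R] by blast
  qed
qed

lemma (in finite_measure) continuous_compose_near_id:
  assumes cont: "continuous_map (prod_topology (very_weak_topology M) (very_weak_topology M))
      (very_weak_topology M) (\<lambda>(S, T). S \<circ> T)"
    and V: "openin (very_weak_topology M) V" and id: "id \<in> V"
  obtains BB d where "finite BB" "BB \<subseteq> sets M" "d > 0"
    "\<And>S T. S \<in> nonsing_aut M \<Longrightarrow> T \<in> nonsing_aut M \<Longrightarrow> measure M (displacement M S BB) < d \<Longrightarrow>
       measure M (displacement M T BB) < d \<Longrightarrow> S \<circ> T \<in> V"
proof -
  let ?VW = "very_weak_topology M"
  let ?W = "{x \<in> topspace (prod_topology ?VW ?VW). (\<lambda>(S, T). S \<circ> T) x \<in> V}"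
  have W: "openin (prod_topology ?VW ?VW) ?W"
    by (rule openin_continuous_map_preimage[OF cont V])
  have "(id, id) \<in> ?W"
    using id id_in_nonsing_aut by (simp add: topspace_very_weak_topology)
  from openin_prod_topology_alt[THEN iffD1, OF W, rule_format, OF this]
  obtain U1 U2 where U: "openin ?VW U1" "openin ?VW U2" "id \<in> U1" "id \<in> U2"
    and UW: "U1 \<times> U2 \<subseteq> ?W"
    by blast
  obtain BB d where BB: "finite BB" "BB \<subseteq> sets M" "d > 0" and
    BBU: "\<And>R. R \<in> nonsing_aut M \<Longrightarrow> measure M (displacement M R BB) < d \<Longrightarrow> R \<in> U1 \<inter> U2"
    using very_weak_nhds_id[of "U1 \<inter> U2"] U by blast
  show thesis
  proof (rule that[OF BB])
    fix S T assume "S \<in> nonsing_aut M" "T \<in> nonsing_aut M"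
      "measure M (displacement M S BB) < d" "measure M (displacement M T BB) < d"
    then have "(S, T) \<in> ?W" using BBU UW by blast
    then show "S \<circ> T \<in> V" by simp
  qed
qed

lemma (in finite_measure) wot_functional_indicator:
  assumes R: "R \<in> nonsing_aut M" and A: "A \<in> sets M"
  shows "(indicator A, indicator A) \<in> wot_pairs M"
    and "wot_functional M R (indicator A, indicator A) = measure M {x\<in>A. R x \<in> A}"
proof -
  show p: "(indicator A, indicator A) \<in> wot_pairs M"
    using A by (auto simp: wot_pairs_def Linfty_def less_top[symmetric] intro!: exI[of _ 1])
  have "{x\<in>A. R x \<in> A} = A \<inter> (R -` A \<inter> space M)"
    using sets.sets_into_space[OF A] by auto
  then have Y: "{x\<in>A. R x \<in> A} \<in> sets M"
    using A nonsing_autD(2)[OF R] by auto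
  have "wot_functional M R (indicator A, indicator A) = (LINT x|M. indicator {x\<in>A. R x \<in> A} x)"
    unfolding wot_functional_eq[OF R p] by (intro Bochner_Integration.integral_cong) (auto simp: indicator_def)
  also have "\<dots> = measure M {x\<in>A. R x \<in> A}"
    using sets.sets_into_space[OF Y] by (simp add: Int_absorb2)
  finally show "wot_functional M R (indicator A, indicator A) = measure M {x\<in>A. R x \<in> A}" .
qed

section \<open>Lebesgue measure on the unit interval\<close>

lemma (in finite_measure) measure_UN_tail_small:
  fixes A :: "nat \<Rightarrow> 'a set"
  assumes A: "range A \<subseteq> sets M" and e: "e > 0"
  obtains k where "measure M ((\<Union>i. A i) - (\<Union>i<k. A i)) < e"
proof -
  have "incseq (\<lambda>k. \<Union>i<k. A i)" unfolding incseq_def by (intro allI impI UN_mono) auto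
  then have "(\<lambda>k. measure M (\<Union>i<k. A i)) \<longlonglongrightarrow> measure M (\<Union>k. \<Union>i<k. A i)"
    using A by (intro finite_Lim_measure_incseq) auto
  moreover have "(\<Union>k. \<Union>i<k. A i) = (\<Union>i. A i)" by (blast intro: lessI)
  ultimately have "eventually (\<lambda>k. measure M (\<Union>i. A i) - e < measure M (\<Union>i<k. A i)) sequentially"
    using e by (intro order_tendstoD(1)) auto
  then obtain k where "measure M (\<Union>i. A i) - e < measure M (\<Union>i<k. A i)"
    unfolding eventually_sequentially by blast
  moreover have "measure M ((\<Union>i. A i) - (\<Union>i<k. A i)) = measure M (\<Union>i. A i) - measure M (\<Union>i<k. A i)"
    using A by (intro finite_measure_Diff) auto
  ultimately have "measure M ((\<Union>i. A i) - (\<Union>i<k. A i)) < e" by linarith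
  then show thesis by (rule that)
qed

lemma space_nu01 [simp]: "space nu01 = {0..1}"
  by (simp add: nu01_def space_restrict_space)

lemma sets_nu01: "sets nu01 = sets (restrict_space borel {0..1::real})"
  by (simp add: nu01_def sets_restrict_space)

lemma sets_nu01_iff: "B \<in> sets nu01 \<longleftrightarrow> B \<in> sets borel \<and> B \<subseteq> {0..1}"
  by (auto simp: nu01_def sets_restrict_space_iff)

lemma emeasure_nu01: "B \<subseteq> {0..1} \<Longrightarrow> emeasure nu01 B = emeasure lborel B"
  unfolding nu01_def by (rule emeasure_restrict_space) auto

lemma measure_nu01: "B \<subseteq> {0..1} \<Longrightarrow> measure nu01 B = measure lborel B"
  by (simp add: measure_def emeasure_nu01)

lemma prob_space_nu01: "prob_space nu01"
  by (rule prob_spaceI) (simp add: emeasure_nu01)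

interpretation nu: prob_space nu01 by (rule prob_space_nu01)

lemma measure_nu01_singleton [simp]: "measure nu01 {x} = 0"
  by (cases "x \<in> {0..1}") (simp_all add: measure_nu01 measure_notin_sets sets_nu01_iff)

lemma measure_nu01_le_emeasure_lborel:
  assumes X: "X \<in> sets borel" "X \<subseteq> {0..1}" "X \<subseteq> Y" and Y: "Y \<in> sets borel"
    and c: "emeasure lborel Y \<le> ennreal c" "c \<ge> 0"
  shows "measure nu01 X \<le> c"
proof -
  have "ennreal (measure nu01 X) = emeasure lborel X" using X by (simp add: nu.emeasure_eq_measure[symmetric] emeasure_nu01)
  also have "\<dots> \<le> emeasure lborel Y" using X Y by (intro emeasure_mono) auto
  also have "\<dots> \<le> ennreal c" by (rule c)
  finally show ?thesis using c by (simp add: ennreal_le_iff)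
qed

lemma emeasure_lborel_eq_measure_nu01:
  "X \<subseteq> {0..1} \<Longrightarrow> emeasure lborel X = ennreal (measure nu01 X)"
  by (simp add: emeasure_nu01[symmetric] nu.emeasure_eq_measure)

lemma emeasure_lborel_vimage_plus:
  assumes "B \<in> sets borel" shows "emeasure lborel ((+) c -` B) = emeasure lborel (B :: real set)"
proof -
  have "emeasure lborel B = emeasure (distr lborel borel ((+) c)) B" by (simp add: lborel_distr_plus)
  also have "\<dots> = emeasure lborel ((+) c -` B)" using assms by (simp add: emeasure_distr)
  finally show ?thesis by simp
qed

lemma measurable_nu01I:
  assumes "f \<in> restrict_space borel {0..1} \<rightarrow>\<^sub>M borel" and "\<And>x. x \<in> {0..1} \<Longrightarrow> f x \<in> {0..1::real}"
  shows "f \<in> nu01 \<rightarrow>\<^sub>M nu01"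
proof -
  have "f \<in> restrict_space borel {0..1} \<rightarrow>\<^sub>M restrict_space borel {0..1}"
    using measurable_restrict_space2[of f "restrict_space borel {0..1}" "{0..1}" borel] assms
    by (auto simp: space_restrict_space)
  then show ?thesis using measurable_cong_sets[OF sets_nu01 sets_nu01] by simp
qed

section \<open>Approximation by dyadic intervals\<close>

definition dyadic_cell :: "nat \<Rightarrow> real \<Rightarrow> int" where
  "dyadic_cell n x = \<lfloor>2^n * x\<rfloor>"

definition dyadic_invariant :: "nat \<Rightarrow> real set \<Rightarrow> bool" where
  "dyadic_invariant n G \<longleftrightarrow> G \<subseteq> {0..<1} \<and> G \<in> sets borel \<and>
     (\<forall>x\<in>{0..<1}. \<forall>y\<in>{0..<1}. dyadic_cell n x = dyadic_cell n y \<longrightarrow> (x \<in> G \<longleftrightarrow> y \<in> G))"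

text \<open>The intersection with \<open>{0..1}\<close> makes the symmetric difference a measurable set of
  \<open>nu01\<close>, so that its measure is not the junk value \<open>0\<close>.\<close>
definition dyadic_approximable :: "real set \<Rightarrow> bool" where
  "dyadic_approximable B \<longleftrightarrow>
     (\<forall>e>0. \<exists>n G. dyadic_invariant n G \<and> measure nu01 (sym_diff B G \<inter> {0..1}) < e)"

lemma measurable_dyadic_cell [measurable]: "dyadic_cell n \<in> borel \<rightarrow>\<^sub>M count_space UNIV"
proof -
  have "dyadic_cell n = floor \<circ> (\<lambda>x::real. 2^n * x)" by (auto simp: dyadic_cell_def)
  then show ?thesis by (simp add: measurable_comp[OF _ measurable_real_floor])
qed

lemma dyadic_cell_bounds:
  "real_of_int (dyadic_cell n x) / 2^n \<le> x" "x < real_of_int (dyadic_cell n x) / 2^n + 1 / 2^n"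
proof -
  have "real_of_int (dyadic_cell n x) \<le> 2^n * x" "2^n * x < real_of_int (dyadic_cell n x) + 1"
    unfolding dyadic_cell_def by linarith+
  then show "real_of_int (dyadic_cell n x) / 2^n \<le> x"
    "x < real_of_int (dyadic_cell n x) / 2^n + 1 / 2^n"
    by (simp_all add: field_simps)
qed

lemma dyadic_cell_eqI:
  fixes m :: int
  assumes "real_of_int m / 2^n \<le> y" "y < (real_of_int m + 1) / 2^n"
  shows "dyadic_cell n y = m"
  using assms unfolding dyadic_cell_def by (simp add: floor_eq_iff field_simps)

lemma dyadic_cell_coarsen:
  assumes "n \<le> N" "dyadic_cell N x = dyadic_cell N y"
  shows "dyadic_cell n x = dyadic_cell n y"
proof -
  have "dyadic_cell n z = dyadic_cell N z div 2^(N-n)" for z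
  proof -
    have e: "(2::real)^N = 2^n * 2^(N-n)" using assms by (simp add: power_add[symmetric])
    have "\<lfloor>2^n * z\<rfloor> = \<lfloor>(2::real)^N * z / real_of_int (2^(N-n))\<rfloor>" unfolding e by simp
    also have "\<dots> = \<lfloor>2^N * z\<rfloor> div 2^(N-n)" by (rule floor_divide_real_eq_div) simp
    finally show ?thesis unfolding dyadic_cell_def .
  qed
  then show ?thesis using assms by simp
qed

lemma sets_sym_diff_dyadic_invariant:
  assumes "B \<in> sets nu01" "dyadic_invariant n G" shows "sym_diff B G \<inter> {0..1} \<in> sets nu01"
proof -
  have "G \<in> sets borel" using assms(2) by (simp add: dyadic_invariant_def)
  then show ?thesis using assms(1) by (auto simp: sets_nu01_iff)
qed

lemma dyadic_invariant_mono:
  assumes "dyadic_invariant n G" "n \<le> N" shows "dyadic_invariant N G"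
  using assms dyadic_cell_coarsen[OF \<open>n \<le> N\<close>] unfolding dyadic_invariant_def by blast

lemma dyadic_invariant_compl:
  assumes "dyadic_invariant n G" shows "dyadic_invariant n ({0..<1} - G)"
  unfolding dyadic_invariant_def
proof (intro conjI ballI impI)
  show "{0..<1} - G \<in> sets borel" using assms by (auto simp: dyadic_invariant_def)
  fix x y assume "x \<in> {0..<1::real}" "y \<in> {0..<1::real}" "dyadic_cell n x = dyadic_cell n y"
  then show "(x \<in> {0..<1} - G) = (y \<in> {0..<1} - G)" using assms unfolding dyadic_invariant_def by blast
qed auto

lemma dyadic_invariant_UN:
  assumes I: "finite I" and c: "\<And>i. i \<in> I \<Longrightarrow> dyadic_invariant n (G i)"
  shows "dyadic_invariant n (\<Union>i\<in>I. G i)"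
  unfolding dyadic_invariant_def
proof (intro conjI ballI impI)
  have G: "\<And>i. i \<in> I \<Longrightarrow> G i \<in> sets borel" and sub: "\<And>i. i \<in> I \<Longrightarrow> G i \<subseteq> {0..<1}"
    and inv: "\<And>i x y. i \<in> I \<Longrightarrow> x \<in> {0..<1} \<Longrightarrow> y \<in> {0..<1} \<Longrightarrow>
      dyadic_cell n x = dyadic_cell n y \<Longrightarrow> (x \<in> G i \<longleftrightarrow> y \<in> G i)"
    using c unfolding dyadic_invariant_def by blast+
  show "(\<Union>i\<in>I. G i) \<subseteq> {0..<1}" using sub by blast
  show "(\<Union>i\<in>I. G i) \<in> sets borel" using G I by (intro sets.finite_UN) auto
  fix x y assume "x \<in> {0..<1::real}" "y \<in> {0..<1::real}" "dyadic_cell n x = dyadic_cell n y"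
  then show "(x \<in> (\<Union>i\<in>I. G i)) = (y \<in> (\<Union>i\<in>I. G i))" using inv[of _ x y] by blast
qed

lemma dyadic_approximable_empty: "dyadic_approximable {}"
proof -
  have "dyadic_invariant 0 {}" by (simp add: dyadic_invariant_def)
  then show ?thesis unfolding dyadic_approximable_def by (intro allI impI exI[of _ 0] exI[of _ "{}"]) simp
qed

lemma sym_diff_interval_dyadic_subset:
  fixes a b :: real and n :: nat
  defines "G \<equiv> {x\<in>{0..<1::real}. a \<le> real_of_int (dyadic_cell n x) / 2^n \<and> real_of_int (dyadic_cell n x) / 2^n \<le> b}"
  shows "sym_diff {a..b} G \<inter> {0..1} \<subseteq> {a..a + 1/2^n} \<union> {b..b + 1/2^n} \<union> {1}"
proof
  fix x assume x: "x \<in> sym_diff {a..b} G \<inter> {0..1}"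
  have c: "real_of_int (dyadic_cell n x) / 2^n \<le> x" "x < real_of_int (dyadic_cell n x) / 2^n + 1/2^n"
    by (rule dyadic_cell_bounds)+
  show "x \<in> {a..a + 1/2^n} \<union> {b..b + 1/2^n} \<union> {1}"
  proof (cases "x = 1")
    case False
    then have "x \<in> {0..<1}" using x by auto
    then show ?thesis using x c by (auto simp: G_def)
  qed simp
qed

lemma dyadic_approximable_interval: "dyadic_approximable {a..b}"
  unfolding dyadic_approximable_def
proof (intro allI impI)
  fix e :: real assume e: "e > 0"
  obtain n :: nat where n: "(1/2) ^ n < e / 2"
    using real_arch_pow_inv[of "e/2" "1/2"] e by auto
  define L :: real where "L = 1 / 2^n"
  have L: "L < e / 2" "L > 0" using n by (auto simp: L_def power_one_over)
  define G where "G = {x\<in>{0..<1::real}. a \<le> real_of_int (dyadic_cell n x) / 2^n \<and> real_of_int (dyadic_cell n x) / 2^n \<le> b}"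
  have Gb: "G \<in> sets borel"
  proof -
    have "G = {x\<in>space borel. x \<in> {0..<1::real} \<and> a \<le> real_of_int (dyadic_cell n x) / 2^n \<and> real_of_int (dyadic_cell n x) / 2^n \<le> b}"
      by (simp add: G_def)
    also have "\<dots> \<in> sets borel" by measurable
    finally show ?thesis .
  qed
  have "dyadic_invariant n G" using Gb unfolding dyadic_invariant_def by (auto simp: G_def)
  moreover have "measure nu01 (sym_diff {a..b} G \<inter> {0..1}) \<le> 2 * L"
  proof (rule measure_nu01_le_emeasure_lborel)
    show "sym_diff {a..b} G \<inter> {0..1} \<subseteq> {a..a+L} \<union> {b..b+L} \<union> {1}"
      unfolding G_def L_def by (rule sym_diff_interval_dyadic_subset)
    have "emeasure lborel ({a..a+L} \<union> {b..b+L} \<union> {1}) \<le> emeasure lborel {a..a+L} + emeasure lborel {b..b+L} + emeasure lborel {1::real}"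
      by (intro order_trans[OF emeasure_subadditive] add_mono emeasure_subadditive) auto
    also have "\<dots> = ennreal (2 * L)" using L by (simp add: ennreal_plus[symmetric] del: ennreal_plus)
    finally show "emeasure lborel ({a..a+L} \<union> {b..b+L} \<union> {1}) \<le> ennreal (2 * L)" .
  qed (use Gb L in auto)
  ultimately show "\<exists>n G. dyadic_invariant n G \<and> measure nu01 (sym_diff {a..b} G \<inter> {0..1}) < e"
    using L by force
qed

lemma dyadic_approximable_compl:
  assumes A: "A \<in> sets borel" and ap: "dyadic_approximable A"
  shows "dyadic_approximable (-A)"
  unfolding dyadic_approximable_def
proof (intro allI impI)
  fix e :: real assume e: "e > 0"
  obtain n G where G: "dyadic_invariant n G" and mG: "measure nu01 (sym_diff A G \<inter> {0..1}) < e"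
    using ap e unfolding dyadic_approximable_def by blast
  have Gb: "G \<in> sets borel" "G \<subseteq> {0..<1}" using G unfolding dyadic_invariant_def by blast+
  have X: "sym_diff A G \<inter> {0..1} \<in> sets nu01" using A Gb by (auto simp: sets_nu01_iff)
  have "measure nu01 (sym_diff (-A) ({0..<1} - G) \<inter> {0..1}) \<le> measure nu01 ((sym_diff A G \<inter> {0..1}) \<union> {1})"
    using Gb(2) X by (intro nu.finite_measure_mono) (auto simp: sets_nu01_iff)
  also have "\<dots> \<le> measure nu01 (sym_diff A G \<inter> {0..1}) + measure nu01 {1}"
    using X by (intro measure_Un_le) (auto simp: sets_nu01_iff)
  also have "\<dots> < e" using mG by simp
  finally show "\<exists>n G. dyadic_invariant n G \<and> measure nu01 (sym_diff (-A) G \<inter> {0..1}) < e"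
    using dyadic_invariant_compl[OF G] by blast
qed

lemma dyadic_approximable_UN:
  assumes fb: "\<And>i. f i \<in> sets borel" and ap: "\<And>i. dyadic_approximable (f i)"
  shows "dyadic_approximable (\<Union>i::nat. f i)"
  unfolding dyadic_approximable_def
proof (intro allI impI)
  fix e :: real assume e: "e > 0"
  define U where "U k = (\<Union>i. f i \<inter> {0..1}) - (\<Union>i<k. f i \<inter> {0..1})" for k
  have Us: "U k \<in> sets nu01" for k using fb by (auto simp: U_def sets_nu01_iff)
  have "range (\<lambda>i. f i \<inter> {0..1}) \<subseteq> sets nu01" using fb by (auto simp: sets_nu01_iff)
  then obtain k where k: "measure nu01 (U k) < e/2"
    using nu.measure_UN_tail_small[of "\<lambda>i. f i \<inter> {0..1}" "e/2"] e unfolding U_def by (metis half_gt_zero)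
  define e' where "e' = e / (2 * (real k + 1))"
  have "\<forall>i. \<exists>n G. dyadic_invariant n G \<and> measure nu01 (sym_diff (f i) G \<inter> {0..1}) < e'"
    using ap e unfolding dyadic_approximable_def e'_def by simp
  then obtain nn GG where nG: "\<And>i. dyadic_invariant (nn i) (GG i)"
    and mG: "\<And>i. measure nu01 (sym_diff (f i) (GG i) \<inter> {0..1}) < e'"
    by metis
  define D where "D i = sym_diff (f i) (GG i) \<inter> {0..1}" for i
  have Ds: "D i \<in> sets nu01" for i
    using fb[of i] nG[of i] unfolding dyadic_invariant_def by (auto simp: D_def sets_nu01_iff)
  have inv: "dyadic_invariant (\<Sum>i<k. nn i) (\<Union>i<k. GG i)"
  proof (rule dyadic_invariant_UN)
    fix i assume "i \<in> {..<k}"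
    then show "dyadic_invariant (\<Sum>i<k. nn i) (GG i)"
      using dyadic_invariant_mono[OF nG] member_le_sum[of i "{..<k}" nn] by blast
  qed simp
  have "sym_diff (\<Union>i. f i) (\<Union>i<k. GG i) \<inter> {0..1} \<subseteq> U k \<union> (\<Union>i<k. D i)"
    by (auto simp: U_def D_def)
  then have "measure nu01 (sym_diff (\<Union>i. f i) (\<Union>i<k. GG i) \<inter> {0..1})
      \<le> measure nu01 (U k \<union> (\<Union>i<k. D i))"
    using Us Ds by (intro nu.finite_measure_mono) auto
  also have "\<dots> \<le> measure nu01 (U k) + measure nu01 (\<Union>i<k. D i)"
    using Us Ds by (intro measure_Un_le) auto
  also have "\<dots> \<le> measure nu01 (U k) + (\<Sum>i<k. measure nu01 (D i))"
    using Ds measure_UNION_le[of "{..<k}" D nu01] by simp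
  also have "\<dots> \<le> measure nu01 (U k) + real k * e'"
    using sum_mono[of "{..<k}" "\<lambda>i. measure nu01 (D i)" "\<lambda>_. e'"] mG by (simp add: D_def less_imp_le)
  also have "\<dots> < e"
  proof -
    have "real k * e' < e / 2" using e by (simp add: e'_def field_simps)
    then show ?thesis using k by linarith
  qed
  finally show "\<exists>n G. dyadic_invariant n G \<and> measure nu01 (sym_diff (\<Union>i. f i) G \<inter> {0..1}) < e"
    using inv by blast
qed

lemma dyadic_approximable_borel: "B \<in> sets borel \<Longrightarrow> dyadic_approximable B"
proof (induction rule: borel_set_induct)
  case empty show ?case by (rule dyadic_approximable_empty)
next
  case (interval a b) show ?case by (rule dyadic_approximable_interval)
next
  case (compl A) then show ?case by (rule dyadic_approximable_compl)
next
  case (union f) then show ?case by (intro dyadic_approximable_UN) auto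
qed

lemma dyadic_approximation_family:
  assumes BB: "finite BB" "BB \<subseteq> sets nu01" and eta: "eta > 0"
  obtains n G where "n \<ge> 1"
    "\<And>B. B \<in> BB \<Longrightarrow> dyadic_invariant n (G B)"
    "\<And>B. B \<in> BB \<Longrightarrow> measure nu01 (sym_diff B (G B) \<inter> {0..1}) < eta"
proof -
  have "\<exists>m G. dyadic_invariant m G \<and> measure nu01 (sym_diff B G \<inter> {0..1}) < eta" if "B \<in> BB" for B
  proof -
    have "B \<in> sets borel" using that BB by (auto simp: sets_nu01_iff)
    then show ?thesis using dyadic_approximable_borel eta unfolding dyadic_approximable_def by blast
  qed
  then obtain m G where m: "\<And>B. B \<in> BB \<Longrightarrow> dyadic_invariant (m B) (G B)"
    and G: "\<And>B. B \<in> BB \<Longrightarrow> measure nu01 (sym_diff B (G B) \<inter> {0..1}) < eta"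
    by metis
  show thesis
  proof (rule that[of "1 + (\<Sum>B\<in>BB. m B)" G])
    fix B assume B: "B \<in> BB"
    then have "m B \<le> 1 + (\<Sum>B\<in>BB. m B)" using BB(1) member_le_sum[of B BB m] by simp
    then show "dyadic_invariant (1 + (\<Sum>B\<in>BB. m B)) (G B)" using dyadic_invariant_mono m[OF B] by blast
  qed (use G in auto)
qed

section \<open>The two transformations\<close>

text \<open>The union of the initial \<open>1/K\<close>-parts of all dyadic intervals of length \<open>2\<^sup>-\<^sup>n\<close>.\<close>
definition dyadic_heads :: "nat \<Rightarrow> nat \<Rightarrow> real set" where
  "dyadic_heads n K = {y. 2^n * y - real_of_int (dyadic_cell n y) < 1 / real K}"

lemma dyadic_heads_borel[measurable]: "dyadic_heads n K \<in> sets borel"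
proof -
  have "dyadic_heads n K = {y\<in>space borel. 2^n * y - real_of_int (dyadic_cell n y) < 1 / real K}"
    by (simp add: dyadic_heads_def)
  also have "\<dots> \<in> sets borel" by measurable
  finally show ?thesis .
qed

lemma dyadic_heads_Ico:
  fixes m :: int
  assumes K: "K > 0"
  shows "dyadic_heads n K \<inter> {real_of_int m / 2^n ..< (real_of_int m + 1) / 2^n} =
         {real_of_int m / 2^n ..< real_of_int m / 2^n + 1 / (2^n * real K)}"
proof -
  have K1: "1 / real K \<le> 1" using K by auto
  have "y \<in> dyadic_heads n K \<longleftrightarrow> y < real_of_int m / 2^n + 1 / (2^n * real K)"
    if y: "real_of_int m / 2^n \<le> y" "y < (real_of_int m + 1) / 2^n" for y
  proof -
    have c: "dyadic_cell n y = m" by (rule dyadic_cell_eqI[OF y])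
    have "y \<in> dyadic_heads n K \<longleftrightarrow> 2^n * y - real_of_int m < 1 / real K" by (simp add: dyadic_heads_def c)
    also have "\<dots> \<longleftrightarrow> y < real_of_int m / 2^n + 1 / (2^n * real K)"
      by (simp add: field_simps)
    finally show ?thesis .
  qed
  moreover have "real_of_int m / 2^n + 1 / (2^n * real K) \<le> (real_of_int m + 1) / 2^n"
  proof -
    have "1 / (2^n * real K) \<le> 1 / 2^n" using K by (simp add: field_simps)
    then show ?thesis by (simp add: add_divide_distrib)
  qed
  ultimately show ?thesis by fastforce
qed

lemma emeasure_dyadic_heads_Ico:
  assumes K: "K > 0"
  shows "emeasure lborel (dyadic_heads n K \<inter> {0..<real m / 2^n}) = ennreal (real m / (2^n * real K))"
proof (induction m)
  case 0
  then show ?case by simp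
next
  case (Suc m)
  have nonneg: "0 \<le> x" if "real m \<le> x * 2^n" for x :: real
  proof -
    have "0 \<le> x * 2^n" using that by (meson of_nat_0_le_iff order_trans)
    then show ?thesis using divide_nonneg_pos[OF \<open>0 \<le> x * 2^n\<close>, of "2^n"] by simp
  qed
  have split: "dyadic_heads n K \<inter> {0..<real (Suc m) / 2^n} =
      (dyadic_heads n K \<inter> {0..<real m / 2^n}) \<union> (dyadic_heads n K \<inter> {real_of_int (int m) / 2^n ..< (real_of_int (int m) + 1) / 2^n})"
    by (auto simp: field_simps intro: nonneg)
  have disj: "(dyadic_heads n K \<inter> {0..<real m / 2^n}) \<inter> (dyadic_heads n K \<inter> {real_of_int (int m) / 2^n ..< (real_of_int (int m) + 1) / 2^n}) = {}"
    by auto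
  have "emeasure lborel (dyadic_heads n K \<inter> {0..<real (Suc m) / 2^n}) =
      emeasure lborel (dyadic_heads n K \<inter> {0..<real m / 2^n}) + emeasure lborel (dyadic_heads n K \<inter> {real_of_int (int m) / 2^n ..< (real_of_int (int m) + 1) / 2^n})"
    unfolding split by (rule plus_emeasure[symmetric]) (use disj in auto)
  also have "\<dots> = ennreal (real m / (2^n * real K)) + ennreal (1 / (2^n * real K))"
    unfolding Suc.IH dyadic_heads_Ico[OF K] by simp
  also have "\<dots> = ennreal (real (Suc m) / (2^n * real K))"
    by (simp add: ennreal_plus[symmetric] add_divide_distrib del: ennreal_plus)
  finally show ?case .
qed

lemma emeasure_dyadic_heads_Icc:
  assumes K: "K > 0"
  shows "emeasure lborel (dyadic_heads n K \<inter> {0..real m / 2^n}) = ennreal (real m / (2^n * real K))"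
proof -
  have "dyadic_heads n K \<inter> {0..real m / 2^n} = (dyadic_heads n K \<inter> {0..<real m / 2^n}) \<union> (dyadic_heads n K \<inter> {real m / 2^n})"
    by auto
  moreover have "emeasure lborel ((dyadic_heads n K \<inter> {0..<real m / 2^n}) \<union> (dyadic_heads n K \<inter> {real m / 2^n})) =
      emeasure lborel (dyadic_heads n K \<inter> {0..<real m / 2^n})"
    by (rule emeasure_Un_null_set)
       (use emeasure_mono[of "dyadic_heads n K \<inter> {real m / 2^n}" "{real m / 2^n}" lborel] in \<open>auto simp: null_sets_def\<close>)
  ultimately show ?thesis using emeasure_dyadic_heads_Ico[OF K] by simp
qed

locale dyadic_squeeze =
  fixes n K :: nat
  assumes n_ge_1: "n \<ge> 1" and K_ge_2: "K \<ge> 2"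
begin

definition E :: "real set" where "E = dyadic_heads n K"

text \<open>\<open>F\<close> is the distribution function of the density \<open>1/2 + K/2 \<cdot> 1\<^sub>E\<close> on \<open>[0, 1]\<close>; it fixes
  the dyadic points of level \<open>n\<close>, and its inverse \<open>T\<close> pushes \<open>nu01\<close> forward to that density.\<close>
definition F :: "real \<Rightarrow> real" where
  "F y = y / 2 + real K / 2 * measure nu01 (E \<inter> {0..y})"

lemma K_pos: "K > 0" using K_ge_2 by simp

lemma E_borel[measurable]: "E \<in> sets borel" by (simp add: E_def)

lemma measure_E_dyadic:
  assumes "m \<le> 2^n"
  shows "measure nu01 (E \<inter> {0..real m / 2^n}) = real m / (2^n * real K)"
proof -
  have sub: "E \<inter> {0..real m / 2^n} \<subseteq> {0..1}"
  proof -
    have "real m / 2^n \<le> 1" using assms by (simp add: field_simps)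
    then show ?thesis by (meson IntD2 atLeastAtMost_iff order_trans subsetI)
  qed
  have "measure nu01 (E \<inter> {0..real m / 2^n}) = measure lborel (E \<inter> {0..real m / 2^n})"
    by (rule measure_nu01[OF sub])
  also have "\<dots> = real m / (2^n * real K)"
    using emeasure_dyadic_heads_Icc[OF K_pos, of n m] by (simp add: measure_def E_def)
  finally show ?thesis .
qed

lemma F_dyadic:
  assumes "m \<le> 2^n"
  shows "F (real m / 2^n) = real m / 2^n"
  unfolding F_def measure_E_dyadic[OF assms] using K_pos by (simp add: field_simps)

lemma F_0: "F 0 = 0" using F_dyadic[of 0] by simp

lemma F_1: "F 1 = 1" using F_dyadic[of "2^n"] by simp

lemma F_diff_bounds:
  assumes y: "0 \<le> y" "y \<le> y'" "y' \<le> 1"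
  shows "(y' - y) / 2 \<le> F y' - F y" "F y' - F y \<le> (1 + real K) / 2 * (y' - y)"
proof -
  let ?A = "E \<inter> {0..y}" and ?B = "E \<inter> {y<..y'}"
  have As: "?A \<in> sets nu01" and Bs: "?B \<in> sets nu01" using y by (auto simp: sets_nu01_iff)
  have "E \<inter> {0..y'} = ?A \<union> ?B" using y by auto
  moreover have "?A \<inter> ?B = {}" by auto
  ultimately have add: "measure nu01 (E \<inter> {0..y'}) = measure nu01 ?A + measure nu01 ?B"
    using nu.finite_measure_Union[OF As Bs] by simp
  have B0: "0 \<le> measure nu01 ?B" by simp
  have "measure nu01 ?B \<le> measure nu01 {y..y'}"
    by (rule nu.finite_measure_mono) (use y in \<open>auto simp: sets_nu01_iff\<close>)
  also have "\<dots> = y' - y" using y by (simp add: measure_nu01)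
  finally have B1: "measure nu01 ?B \<le> y' - y" .
  have eq: "F y' - F y = (y' - y) / 2 + real K / 2 * measure nu01 ?B"
    unfolding F_def add by (simp add: field_simps)
  show "(y' - y) / 2 \<le> F y' - F y" unfolding eq using B0 by simp
  have "real K / 2 * measure nu01 ?B \<le> real K / 2 * (y' - y)" using B1 by (intro mult_left_mono) auto
  then show "F y' - F y \<le> (1 + real K) / 2 * (y' - y)" unfolding eq by (simp add: field_simps)
qed

lemma F_less: assumes "0 \<le> y" "y < y'" "y' \<le> 1" shows "F y < F y'"
proof -
  have "(y' - y) / 2 \<le> F y' - F y" using F_diff_bounds(1)[of y y'] assms by simp
  moreover have "0 < (y' - y) / 2" using assms by simp
  ultimately show ?thesis by linarith
qed

lemma F_le_iff: "a \<in> {0..1} \<Longrightarrow> b \<in> {0..1} \<Longrightarrow> F a \<le> F b \<longleftrightarrow> a \<le> b"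
  using F_less[of a b] F_less[of b a] by (cases "a = b") (auto simp: not_le[symmetric])

lemma continuous_on_F: "continuous_on {0..1} F"
proof (rule lipschitz_on_continuous_on)
  show "((1 + real K) / 2)-lipschitz_on {0..1} F"
  proof (rule lipschitz_onI)
    fix x y :: real assume x: "x \<in> {0..1}" and y: "y \<in> {0..1}"
    show "dist (F x) (F y) \<le> (1 + real K) / 2 * dist x y"
    proof (cases "x \<le> y")
      case True
      then show ?thesis using F_diff_bounds[of x y] x y by (simp add: dist_real_def abs_if)
    next
      case False
      then show ?thesis using F_diff_bounds[of y x] x y by (simp add: dist_real_def abs_if)
    qed
  qed simp
qed

lemma F_image: "F ` {0..1} = {0..1}"
proof
  show "F ` {0..1} \<subseteq> {0..1}"
  proof
    fix z assume "z \<in> F ` {0..1}"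
    then obtain y where y: "y \<in> {0..1}" "z = F y" by auto
    have "F 0 \<le> F y" "F y \<le> F 1" using y F_le_iff[of 0 y] F_le_iff[of y 1] by auto
    then show "z \<in> {0..1}" using y F_0 F_1 by simp
  qed
  show "{0..1} \<subseteq> F ` {0..1}"
  proof
    fix z :: real assume z: "z \<in> {0..1}"
    have "\<exists>y\<ge>0. y \<le> 1 \<and> F y = z"
      by (rule IVT') (use z F_0 F_1 continuous_on_F in auto)
    then show "z \<in> F ` {0..1}" by force
  qed
qed

lemma inj_on_F: "inj_on F {0..1}"
proof (rule inj_onI)
  fix a b assume a: "a \<in> {0..1::real}" and b: "b \<in> {0..1::real}" and e: "F a = F b"
  have "a \<le> b" using F_le_iff[OF a b] e by simp
  moreover have "b \<le> a" using F_le_iff[OF b a] e by simp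
  ultimately show "a = b" by simp
qed

lemma bij_betw_F: "bij_betw F {0..1} {0..1}"
  unfolding bij_betw_def using inj_on_F F_image by simp

definition T :: "real \<Rightarrow> real" where
  "T x = (if x \<in> {0..1} then inv_into {0..1} F x else x)"

lemma T_in: "x \<in> {0..1} \<Longrightarrow> T x \<in> {0..1}"
  using inv_into_into[of x F "{0..1}"] F_image by (simp add: T_def)

lemma F_T: "x \<in> {0..1} \<Longrightarrow> F (T x) = x"
  unfolding T_def using F_image by (auto intro: f_inv_into_f)

lemma T_F: "y \<in> {0..1} \<Longrightarrow> T (F y) = y"
proof -
  assume y: "y \<in> {0..1}"
  then have "F y \<in> {0..1}" using F_image by auto
  then show ?thesis unfolding T_def using y inj_on_F by (simp add: inv_into_f_f)
qed

lemma T_le_iff: "x \<in> {0..1} \<Longrightarrow> y \<in> {0..1} \<Longrightarrow> T x \<le> y \<longleftrightarrow> x \<le> F y"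
  using F_le_iff[of "T x" y] T_in F_T by simp

lemma T_ge_iff: "x \<in> {0..1} \<Longrightarrow> y \<in> {0..1} \<Longrightarrow> y \<le> T x \<longleftrightarrow> F y \<le> x"
  using F_le_iff[of y "T x"] T_in F_T by simp

lemma bij_betw_T: "bij_betw T {0..1} {0..1}"
proof -
  have "bij_betw (inv_into {0..1} F) {0..1} {0..1}" using bij_betw_F bij_betw_inv_into by blast
  then show ?thesis by (rule bij_betw_cong[THEN iffD1, rotated]) (simp add: T_def)
qed

lemma mono_on_T: "mono_on {0..1} T"
  unfolding mono_on_def using T_le_iff T_in F_T by metis

lemma inv_into_T: "y \<in> {0..1} \<Longrightarrow> inv_into {0..1} T y = F y"
proof -
  assume y: "y \<in> {0..1}"
  have "F y \<in> {0..1}" using y F_image by auto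
  moreover have "T (F y) = y" by (rule T_F[OF y])
  ultimately show ?thesis using bij_betw_imp_inj_on[OF bij_betw_T] by (intro inv_into_f_eq) auto
qed

lemma mono_on_F: "mono_on {0..1} F"
  unfolding mono_on_def using F_le_iff by blast

lemma T_measurable: "T \<in> nu01 \<rightarrow>\<^sub>M nu01"
  by (rule measurable_nu01I[OF borel_measurable_mono_on_fnc[OF mono_on_T] T_in])

lemma inv_T_measurable: "inv_into (space nu01) T \<in> nu01 \<rightarrow>\<^sub>M nu01"
proof -
  have "F \<in> nu01 \<rightarrow>\<^sub>M nu01"
    by (rule measurable_nu01I[OF borel_measurable_mono_on_fnc[OF mono_on_F]]) (use F_image in auto)
  then show ?thesis by (subst measurable_cong[where g=F]) (auto simp: inv_into_T)
qed

lemma dyadic_cell_T: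
  assumes x: "x \<in> {0..<1}"
  shows "T x \<in> {0..<1}" "dyadic_cell n (T x) = dyadic_cell n x"
proof -
  have "0 \<le> dyadic_cell n x" using x by (simp add: dyadic_cell_def)
  then obtain m :: nat where m: "dyadic_cell n x = int m" using nonneg_int_cases by metis
  have "2^n * x < 2^n" using x by simp
  then have "\<lfloor>2^n * x\<rfloor> < (2::int)^n" by (simp add: floor_less_iff)
  then have "int m < 2^n" using m unfolding dyadic_cell_def by simp
  then have m1: "m + 1 \<le> 2^n" by simp
  then have m1r: "real m + 1 \<le> 2^n" using of_nat_le_iff[where 'a=real, THEN iffD2, OF m1] by simp
  have bx: "real m / 2^n \<le> x" "x < real (m + 1) / 2^n"
    using dyadic_cell_bounds[where n=n and x=x] unfolding m by (simp_all add: add_divide_distrib)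
  have lo: "real m / 2^n \<in> {0..1}" and hi: "real (m + 1) / 2^n \<in> {0..1}"
    using m1 m1r by (auto simp: field_simps)
  have x1: "x \<in> {0..1}" using x by auto
  have tlo: "real m / 2^n \<le> T x" using T_ge_iff[OF x1 lo] F_dyadic[of m] m1 bx by simp
  moreover have thi: "T x < real (m + 1) / 2^n" using T_ge_iff[OF x1 hi] F_dyadic[of "m + 1"] m1 bx by simp
  ultimately show "dyadic_cell n (T x) = dyadic_cell n x"
    unfolding m by (intro dyadic_cell_eqI) (simp_all add: add_divide_distrib)
  have "0 \<le> real m / 2^n" "real (m + 1) / 2^n \<le> 1" using lo hi by auto
  then show "T x \<in> {0..<1}" using tlo thi unfolding atLeastLessThan_iff by linarith
qed

lemma T_1: "T 1 = 1" using T_F[of 1] F_1 by simp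

lemma F_half: "F (1/2) = 1/2"
proof -
  have "(2::real)^n = 2 * 2^(n-1)" using n_ge_1 by (cases n) auto
  then have "real (2^(n-1)) / 2^n = (1/2::real)" by simp
  moreover have "(2::nat)^(n-1) \<le> 2^n" by (simp add: power_increasing)
  ultimately show ?thesis using F_dyadic[of "2^(n-1)"] by simp
qed

lemma T_le_half_iff: "x \<in> {0..1} \<Longrightarrow> T x \<le> 1/2 \<longleftrightarrow> x \<le> 1/2"
  using T_le_iff[of x "1/2"] F_half by simp

definition dens :: "real \<Rightarrow> ennreal" where
  "dens y = ennreal (indicator {0..1} y * (1/2 + real K / 2 * indicator E y))"

lemma dens_measurable[measurable]: "dens \<in> borel_measurable borel"
  unfolding dens_def by measurable

lemma emeasure_density_dens:
  assumes B: "B \<in> sets borel"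
  shows "emeasure (density lborel dens) B =
    ennreal (1/2 * measure nu01 (B \<inter> {0..1}) + real K / 2 * measure nu01 (B \<inter> {0..1} \<inter> E))"
proof -
  have "emeasure (density lborel dens) B = (\<integral>\<^sup>+ x. dens x * indicator B x \<partial>lborel)"
    by (rule emeasure_density) (use B in auto)
  also have "\<dots> = (\<integral>\<^sup>+ x. ennreal (1/2) * indicator (B \<inter> {0..1}) x + ennreal (real K / 2) * indicator (B \<inter> {0..1} \<inter> E) x \<partial>lborel)"
  proof (rule nn_integral_cong)
    fix x
    have s: "ennreal (1/2 + real K / 2) = ennreal (1/2) + ennreal (real K / 2)" by (rule ennreal_plus) auto
    show "dens x * indicator B x = ennreal (1/2) * indicator (B \<inter> {0..1}) x + ennreal (real K / 2) * indicator (B \<inter> {0..1} \<inter> E) x"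
      by (cases "x \<in> B"; cases "x \<in> {0..1}"; cases "x \<in> E") (simp_all only: dens_def indicator_simps s mult_1_right mult_0_right mult_1 mult_0 add_0_right add_0 IntI Int_iff simp_thms ennreal_0, auto)
  qed
  also have "\<dots> = ennreal (1/2) * emeasure lborel (B \<inter> {0..1}) + ennreal (real K / 2) * emeasure lborel (B \<inter> {0..1} \<inter> E)"
    using B by (subst nn_integral_add) (auto simp: nn_integral_cmult_indicator)
  also have "\<dots> = ennreal (1/2) * ennreal (measure nu01 (B \<inter> {0..1})) + ennreal (real K / 2) * ennreal (measure nu01 (B \<inter> {0..1} \<inter> E))"
    using B by (simp only: emeasure_lborel_eq_measure_nu01[of "B \<inter> {0..1}"] emeasure_lborel_eq_measure_nu01[of "B \<inter> {0..1} \<inter> E"] sets.Int E_borel borel_closed closed_atLeastAtMost Int_lower2 le_infI1)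
  also have "\<dots> = ennreal (1/2 * measure nu01 (B \<inter> {0..1}) + real K / 2 * measure nu01 (B \<inter> {0..1} \<inter> E))"
    by (simp only: ennreal_mult[symmetric] ennreal_plus[symmetric] divide_nonneg_nonneg measure_nonneg
        of_nat_0_le_iff zero_le_one zero_le_numeral mult_nonneg_nonneg)
  finally show ?thesis .
qed

lemma T_borel_measurable: "T \<in> borel_measurable nu01"
proof -
  have "T \<in> restrict_space borel {0..1} \<rightarrow>\<^sub>M borel" by (rule borel_measurable_mono_on_fnc[OF mono_on_T])
  moreover have eq: "(nu01 \<rightarrow>\<^sub>M borel) = (restrict_space borel {0..1} \<rightarrow>\<^sub>M borel)"
    by (rule measurable_cong_sets[OF sets_nu01 refl])
  ultimately show ?thesis by (simp only: eq)
qed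

lemma vimage_T_atMost: "y \<in> {0..1} \<Longrightarrow> T -` {..y} \<inter> {0..1} = {0..F y}"
proof -
  assume y: "y \<in> {0..1}"
  have Qy: "F y \<in> {0..1}" using F_image y by auto
  show ?thesis
  proof (intro set_eqI iffI)
    fix x assume "x \<in> T -` {..y} \<inter> {0..1}"
    then show "x \<in> {0..F y}" using T_le_iff[OF _ y, of x] by auto
  next
    fix x assume x: "x \<in> {0..F y}"
    then have "x \<in> {0..1}" using Qy by auto
    then show "x \<in> T -` {..y} \<inter> {0..1}" using T_le_iff[OF _ y, of x] x by auto
  qed
qed

lemma measure_distr_T_atMost: "measure (distr nu01 borel T) {..y} = (if y < 0 then 0 else if y \<le> 1 then F y else 1)"
proof -
  have "measure (distr nu01 borel T) {..y} = measure nu01 (T -` {..y} \<inter> {0..1})"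
    by (simp add: measure_distr[OF T_borel_measurable])
  also have "\<dots> = (if y < 0 then 0 else if y \<le> 1 then F y else 1)"
  proof (cases "y < 0")
    case True
    then have "T -` {..y} \<inter> {0..1} = {}" using T_in by force
    then show ?thesis using True by simp
  next
    case False
    show ?thesis
    proof (cases "y \<le> 1")
      case True
      then have y: "y \<in> {0..1}" using False by auto
      have "F y \<in> {0..1}" using F_image y by auto
      then show ?thesis using False True vimage_T_atMost[OF y] by (simp add: measure_nu01)
    next
      case False2: False
      then have "T -` {..y} \<inter> {0..1} = {0..1}" using T_in by force
      then show ?thesis using False False2 by (simp add: measure_nu01)
    qed
  qed
  finally show ?thesis .
qed

lemma measure_density_dens_atMost: "measure (density lborel dens) {..y} = (if y < 0 then 0 else if y \<le> 1 then F y else 1)"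
proof -
  have "measure (density lborel dens) {..y} = 1/2 * measure nu01 ({..y} \<inter> {0..1}) + real K / 2 * measure nu01 ({..y} \<inter> {0..1} \<inter> E)"
    by (rule measure_eq_emeasure_eq_ennreal) (auto simp: emeasure_density_dens simp del: ennreal_plus)
  also have "\<dots> = (if y < 0 then 0 else if y \<le> 1 then F y else 1)"
  proof (cases "y < 0")
    case True
    then have "{..y} \<inter> {0..1} = {}" by auto
    then show ?thesis using True by simp
  next
    case False
    show ?thesis
    proof (cases "y \<le> 1")
      case True
      have e1: "{..y} \<inter> {0..1} = {0..y}" using True by auto
      have e2: "{0..y} \<inter> E = E \<inter> {0..y}" by auto
      show ?thesis using False True unfolding e1 e2 F_def by (simp add: measure_nu01)
    next
      case False2: False
      have e1: "{..y} \<inter> {0..1} = {0..1}" using False2 by auto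
      have e2: "{0..1} \<inter> E = E \<inter> {0..1}" by auto
      show ?thesis using False False2 F_1 unfolding e1 e2 F_def by (simp add: measure_nu01)
    qed
  qed
  finally show ?thesis .
qed

lemma distr_T_eq_density_dens: "distr nu01 borel T = density lborel dens"
proof (rule cdf_unique')
  show "finite_borel_measure (distr nu01 borel T)"
  proof (intro finite_borel_measure.intro finite_borel_measure_axioms.intro)
    show "finite_measure (distr nu01 borel T)" by (rule nu.finite_measure_distr[OF T_borel_measurable])
  qed simp
  show "finite_borel_measure (density lborel dens)"
  proof (intro finite_borel_measure.intro finite_borel_measure_axioms.intro)
    show "finite_measure (density lborel dens)"
      by (intro finite_measureI) (simp add: emeasure_density_dens)
  qed simp
  show "cdf (distr nu01 borel T) = cdf (density lborel dens)"
    unfolding cdf_def measure_distr_T_atMost measure_density_dens_atMost ..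
qed

lemma measure_vimage_T:
  assumes B: "B \<in> sets nu01"
  shows "emeasure nu01 (T -` B \<inter> {0..1}) = ennreal (measure nu01 B / 2 + real K / 2 * measure nu01 (B \<inter> E))"
    "measure nu01 (T -` B \<inter> {0..1}) = measure nu01 B / 2 + real K / 2 * measure nu01 (B \<inter> E)"
proof -
  have Bb: "B \<in> sets borel" "B \<subseteq> {0..1}" using B by (auto simp: sets_nu01_iff)
  have e1: "B \<inter> {0..1} = B" and e2: "B \<inter> {0..1} \<inter> E = B \<inter> E" using Bb by auto
  have "emeasure nu01 (T -` B \<inter> {0..1}) = emeasure (distr nu01 borel T) B"
    using Bb by (simp add: emeasure_distr[OF T_borel_measurable])
  also have "\<dots> = emeasure (density lborel dens) B" by (simp add: distr_T_eq_density_dens)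
  also have "\<dots> = ennreal (measure nu01 B / 2 + real K / 2 * measure nu01 (B \<inter> E))"
    unfolding emeasure_density_dens[OF Bb(1)] e1 e2 by simp
  finally show 1: "emeasure nu01 (T -` B \<inter> {0..1}) = ennreal (measure nu01 B / 2 + real K / 2 * measure nu01 (B \<inter> E))" .
  then show "measure nu01 (T -` B \<inter> {0..1}) = measure nu01 B / 2 + real K / 2 * measure nu01 (B \<inter> E)"
    by (intro measure_eq_emeasure_eq_ennreal) auto
qed

lemma T_nonsing: "T \<in> nonsing_aut nu01"
  unfolding nonsing_aut_def
proof (intro CollectI conjI ballI)
  show "bij_betw T (space nu01) (space nu01)" using bij_betw_T by simp
  show "T \<in> nu01 \<rightarrow>\<^sub>M nu01" by (rule T_measurable)
  show "inv_into (space nu01) T \<in> nu01 \<rightarrow>\<^sub>M nu01" by (rule inv_T_measurable)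
  fix A assume A: "A \<in> sets nu01"
  define X where "X = measure nu01 A / 2 + real K / 2 * measure nu01 (A \<inter> E)"
  have "emeasure (distr nu01 nu01 T) A = emeasure nu01 (T -` A \<inter> {0..1})"
    using A by (simp add: emeasure_distr[OF T_measurable])
  also have "\<dots> = ennreal X" unfolding X_def by (rule measure_vimage_T(1)[OF A])
  finally have eq: "emeasure (distr nu01 nu01 T) A = ennreal X" .
  have mAE: "measure nu01 (A \<inter> E) \<le> measure nu01 A" by (rule nu.finite_measure_mono[OF _ A]) auto
  have p1: "0 \<le> measure nu01 A" and p2: "0 \<le> measure nu01 (A \<inter> E)" by simp_all
  have p3: "0 \<le> real K / 2 * measure nu01 (A \<inter> E)" using p2 by simp
  have "X \<le> 0 \<longleftrightarrow> measure nu01 A \<le> 0"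
  proof
    assume "X \<le> 0" then show "measure nu01 A \<le> 0" using p3 unfolding X_def by linarith
  next
    assume a: "measure nu01 A \<le> 0"
    then have "measure nu01 (A \<inter> E) = 0" using mAE p2 by linarith
    then show "X \<le> 0" using a unfolding X_def by simp
  qed
  then show "(emeasure (distr nu01 nu01 T) A = 0) = (emeasure nu01 A = 0)"
    unfolding eq nu.emeasure_eq_measure ennreal_eq_0_iff .
qed

definition S :: "real \<Rightarrow> real" where
  "S x = (if x \<in> E \<and> 0 \<le> x \<and> x < 1/2 then x + 1/2 else if x \<in> E \<and> 1/2 \<le> x \<and> x < 1 then x - 1/2 else x)"

lemma E_shift: "y + 1/2 \<in> E \<longleftrightarrow> y \<in> E"
proof -
  have p: "(2::real)^n * (1/2) = real_of_int (2^(n-1))" using n_ge_1 by (cases n) auto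
  have q: "2^n * (y + 1/2) = 2^n * y + real_of_int (2^(n-1))" using p by (simp add: distrib_left)
  have c: "dyadic_cell n (y + 1/2) = dyadic_cell n y + 2^(n-1)"
    unfolding dyadic_cell_def q by (metis floor_add_int)
  have "2^n * (y + 1/2) - real_of_int (dyadic_cell n (y + 1/2)) = 2^n * y - real_of_int (dyadic_cell n y)"
    unfolding c using p by (simp add: distrib_left)
  then show ?thesis by (simp add: E_def dyadic_heads_def)
qed

lemma S_in: "x \<in> {0..1} \<Longrightarrow> S x \<in> {0..1}"
  unfolding S_def by auto

lemma S_S: "x \<in> {0..1} \<Longrightarrow> S (S x) = x"
proof -
  assume x: "x \<in> {0..1}"
  show ?thesis
  proof (cases "x \<in> E \<and> 0 \<le> x \<and> x < 1/2")
    case True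
    then have "x + 1/2 \<in> E" using E_shift by simp
    then show ?thesis using True unfolding S_def by auto
  next
    case False
    show ?thesis
    proof (cases "x \<in> E \<and> 1/2 \<le> x \<and> x < 1")
      case True
      then have "x - 1/2 \<in> E" using E_shift[of "x - 1/2"] by simp
      then show ?thesis using True False unfolding S_def by auto
    next
      case False2: False
      then show ?thesis using False unfolding S_def by auto
    qed
  qed
qed

lemma bij_betw_S: "bij_betw S {0..1} {0..1}"
  by (rule bij_betw_byWitness[where f'=S]) (use S_S S_in in blast)+

lemma inv_into_S: "y \<in> {0..1} \<Longrightarrow> inv_into {0..1} S y = S y"
  using bij_betw_imp_inj_on[OF bij_betw_S] S_in S_S by (intro inv_into_f_eq) auto

lemma S_borel_measurable: "S \<in> borel \<rightarrow>\<^sub>M borel"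
  unfolding S_def by measurable

lemma S_measurable: "S \<in> nu01 \<rightarrow>\<^sub>M nu01"
  by (rule measurable_nu01I[OF measurable_restrict_space1[OF S_borel_measurable] S_in])

lemma inv_S_measurable: "inv_into (space nu01) S \<in> nu01 \<rightarrow>\<^sub>M nu01"
  using S_measurable by (subst measurable_cong[where g=S]) (auto simp: inv_into_S)

lemma S_vimage_null:
  assumes B: "B \<in> sets nu01" and B0: "emeasure nu01 B = 0"
  shows "emeasure nu01 (S -` B \<inter> {0..1}) = 0"
proof -
  have Bb: "B \<in> sets borel" "B \<subseteq> {0..1}" using B by (auto simp: sets_nu01_iff)
  have L0: "emeasure lborel B = 0" using B0 Bb by (simp add: emeasure_nu01)
  have sub: "S -` B \<inter> {0..1} \<subseteq> B \<union> ((+) (1/2) -` B) \<union> ((+) (-1/2) -` B)"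
  proof
    fix x assume x: "x \<in> S -` B \<inter> {0..1}"
    show "x \<in> B \<union> ((+) (1/2) -` B) \<union> ((+) (-1/2) -` B)"
    proof (cases "x \<in> E \<and> 0 \<le> x \<and> x < 1/2")
      case True then show ?thesis using x by (auto simp: S_def add.commute)
    next
      case False
      then show ?thesis using x by (cases "x \<in> E \<and> 1/2 \<le> x \<and> x < 1") (auto simp: S_def)
    qed
  qed
  have m: "S -` B \<inter> {0..1} \<in> sets borel" using S_borel_measurable Bb by measurable
  have sh: "(+) c -` B \<in> sets borel" for c :: real
  proof -
    have "(+) c \<in> borel \<rightarrow>\<^sub>M (borel :: real measure)" by simp
    then have "(+) c -` B \<inter> space borel \<in> sets borel" using Bb(1) by (rule measurable_sets)
    then show ?thesis by simp
  qed
  have "emeasure nu01 (S -` B \<inter> {0..1}) = emeasure lborel (S -` B \<inter> {0..1})"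
    by (simp add: emeasure_nu01)
  also have "\<dots> \<le> emeasure lborel (B \<union> ((+) (1/2) -` B) \<union> ((+) (-1/2) -` B))"
    by (rule emeasure_mono[OF sub]) (use Bb sh m in auto)
  also have "\<dots> \<le> emeasure lborel (B \<union> ((+) (1/2) -` B)) + emeasure lborel ((+) (-1/2) -` B)"
    by (rule emeasure_subadditive) (use Bb sh m in auto)
  also have "\<dots> \<le> emeasure lborel B + emeasure lborel ((+) (1/2) -` B) + emeasure lborel ((+) (-1/2) -` B)"
    by (intro add_mono emeasure_subadditive) (use Bb sh m in auto)
  also have "\<dots> = 0" using L0 Bb by (simp add: emeasure_lborel_vimage_plus)
  finally show ?thesis by simp
qed

lemma S_nonsing: "S \<in> nonsing_aut nu01"
  unfolding nonsing_aut_def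
proof (intro CollectI conjI ballI)
  show "bij_betw S (space nu01) (space nu01)" using bij_betw_S by simp
  show "S \<in> nu01 \<rightarrow>\<^sub>M nu01" by (rule S_measurable)
  show "inv_into (space nu01) S \<in> nu01 \<rightarrow>\<^sub>M nu01" by (rule inv_S_measurable)
  fix A assume A: "A \<in> sets nu01"
  have ed: "emeasure (distr nu01 nu01 S) A = emeasure nu01 (S -` A \<inter> {0..1})"
    using A by (simp add: emeasure_distr[OF S_measurable])
  have A': "S -` A \<inter> {0..1} \<in> sets nu01" using A S_measurable by (auto simp: measurable_def)
  have AA: "S -` (S -` A \<inter> {0..1}) \<inter> {0..1} = A"
  proof (intro set_eqI iffI)
    fix x assume "x \<in> S -` (S -` A \<inter> {0..1}) \<inter> {0..1}"
    then show "x \<in> A" using S_S by auto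
  next
    fix x assume xA: "x \<in> A"
    then have x: "x \<in> {0..1}" using A by (auto simp: sets_nu01_iff)
    then show "x \<in> S -` (S -` A \<inter> {0..1}) \<inter> {0..1}" using S_S[OF x] S_in[OF x] xA by auto
  qed
  show "(emeasure (distr nu01 nu01 S) A = 0) = (emeasure nu01 A = 0)"
  proof
    assume "emeasure (distr nu01 nu01 S) A = 0"
    then have "emeasure nu01 (S -` (S -` A \<inter> {0..1}) \<inter> {0..1}) = 0"
      using S_vimage_null[OF A'] ed by simp
    then show "emeasure nu01 A = 0" unfolding AA .
  next
    assume "emeasure nu01 A = 0"
    then show "emeasure (distr nu01 nu01 S) A = 0" unfolding ed by (rule S_vimage_null[OF A])
  qed
qed

lemma displacement_S_subset: "displacement nu01 S BB \<subseteq> E \<inter> {0..1}"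
  unfolding displacement_def S_def by auto

lemma measure_E: "measure nu01 (E \<inter> {0..1}) = 1 / real K"
  using measure_E_dyadic[of "2^n"] by simp

lemma measure_vimage_T_le:
  assumes D: "D \<in> sets nu01"
  shows "measure nu01 (T -` D \<inter> {0..1}) \<le> (real K + 1) / 2 * measure nu01 D"
proof -
  have "measure nu01 (D \<inter> E) \<le> measure nu01 D" by (rule nu.finite_measure_mono[OF _ D]) auto
  then have "real K / 2 * measure nu01 (D \<inter> E) \<le> real K / 2 * measure nu01 D" by (intro mult_left_mono) auto
  then show ?thesis unfolding measure_vimage_T(2)[OF D] by (simp add: field_simps)
qed

text \<open>Since \<open>T\<close> preserves dyadic cells, it moves no point across a dyadic invariant set, so it
  can only move a point across \<open>B\<close> if the point or its image lies where \<open>B\<close> differs from its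
  dyadic approximation.\<close>
lemma displacement_T_subset:
  assumes G: "\<And>B. B \<in> BB \<Longrightarrow> dyadic_invariant n (G B)"
  shows "displacement nu01 T BB \<subseteq>
    (\<Union>B\<in>BB. (T -` (sym_diff B (G B) \<inter> {0..1}) \<inter> {0..1}) \<union> (sym_diff B (G B) \<inter> {0..1}))"
proof
  fix x assume "x \<in> displacement nu01 T BB"
  then obtain B where B: "B \<in> BB" and x: "x \<in> {0..1}" and ne: "(T x \<in> B) \<noteq> (x \<in> B)"
    unfolding displacement_def by auto
  have "x \<noteq> 1" using ne T_1 by auto
  then have x1: "x \<in> {0..<1}" using x by auto
  have "\<forall>a\<in>{0..<1}. \<forall>b\<in>{0..<1}. dyadic_cell n a = dyadic_cell n b \<longrightarrow> (a \<in> G B \<longleftrightarrow> b \<in> G B)"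
    using G[OF B] unfolding dyadic_invariant_def by blast
  then have "T x \<in> G B \<longleftrightarrow> x \<in> G B" using dyadic_cell_T[OF x1] x1 by blast
  moreover have "T x \<in> {0..1}" using T_in x by blast
  ultimately show "x \<in> (\<Union>B\<in>BB. (T -` (sym_diff B (G B) \<inter> {0..1}) \<inter> {0..1}) \<union> (sym_diff B (G B) \<inter> {0..1}))"
    using B x ne by blast
qed

lemma measure_displacement_T_le:
  assumes BB: "finite BB" "BB \<subseteq> sets nu01" and G: "\<And>B. B \<in> BB \<Longrightarrow> dyadic_invariant n (G B)"
  shows "measure nu01 (displacement nu01 T BB) \<le> (\<Sum>B\<in>BB. (real K + 3) / 2 * measure nu01 (sym_diff B (G B) \<inter> {0..1}))"
proof -
  define D where "D B = sym_diff B (G B) \<inter> {0..1}" for B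
  have Ds: "D B \<in> sets nu01" if "B \<in> BB" for B unfolding D_def using that BB G by (intro sets_sym_diff_dyadic_invariant) auto
  have TDs: "T -` D B \<inter> {0..1} \<in> sets nu01" if "B \<in> BB" for B
    using Ds[OF that] T_measurable by (auto simp: measurable_def)
  have "measure nu01 (displacement nu01 T BB) \<le> measure nu01 (\<Union>B\<in>BB. (T -` D B \<inter> {0..1}) \<union> D B)"
    using displacement_T_subset[OF G] BB Ds TDs unfolding D_def by (intro nu.finite_measure_mono) auto
  also have "\<dots> \<le> (\<Sum>B\<in>BB. measure nu01 ((T -` D B \<inter> {0..1}) \<union> D B))"
    by (rule measure_UNION_le) (use BB Ds TDs in auto)
  also have "\<dots> \<le> (\<Sum>B\<in>BB. (real K + 3) / 2 * measure nu01 (D B))"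
  proof (rule sum_mono)
    fix B assume B: "B \<in> BB"
    have "measure nu01 ((T -` D B \<inter> {0..1}) \<union> D B) \<le> measure nu01 (T -` D B \<inter> {0..1}) + measure nu01 (D B)"
      by (rule measure_Un_le) (use Ds[OF B] TDs[OF B] in auto)
    also have "\<dots> \<le> (real K + 1) / 2 * measure nu01 (D B) + measure nu01 (D B)"
      using measure_vimage_T_le[OF Ds[OF B]] by simp
    also have "\<dots> = (real K + 3) / 2 * measure nu01 (D B)" by (simp add: field_simps)
    finally show "measure nu01 ((T -` D B \<inter> {0..1}) \<union> D B) \<le> (real K + 3) / 2 * measure nu01 (D B)" .
  qed
  finally show ?thesis unfolding D_def .
qed

lemma measure_displacement_S_le: "measure nu01 (displacement nu01 S BB) \<le> 1 / real K"
proof -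
  have "measure nu01 (displacement nu01 S BB) \<le> measure nu01 (E \<inter> {0..1})"
    by (rule nu.finite_measure_mono[OF displacement_S_subset]) (auto simp: sets_nu01_iff)
  then show ?thesis using measure_E by simp
qed

lemma ST_half_subset:
  "{x\<in>{0..1/2}. S (T x) \<in> {0..1/2}} \<subseteq> T -` (({0..1/2} - E) \<union> {0, 1/2}) \<inter> {0..1}"
proof
  fix x assume x: "x \<in> {x\<in>{0..1/2}. S (T x) \<in> {0..1/2}}"
  then have x1: "x \<in> {0..1}" by auto
  have "T x \<in> {0..1}" "T x \<le> 1/2" using T_in[OF x1] T_le_half_iff[OF x1] x by auto
  moreover have "S (T x) \<in> {0..1/2}" using x by auto
  ultimately have "T x \<in> ({0..1/2} - E) \<union> {0, 1/2}" unfolding S_def by (auto split: if_splits)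
  then show "x \<in> T -` (({0..1/2} - E) \<union> {0, 1/2}) \<inter> {0..1}" using x1 by auto
qed

lemma measure_ST_half_le: "measure nu01 {x\<in>{0..1/2}. S (T x) \<in> {0..1/2}} \<le> 1/4"
proof -
  define D where "D = ({0..1/2} - E) \<union> {0, 1/2::real}"
  have D: "D \<in> sets nu01" by (auto simp: D_def sets_nu01_iff)
  have "measure nu01 {0, 1/2::real} = 0"
    using emeasure_lborel_countable[of "{0, 1/2::real}"]
    by (simp add: emeasure_lborel_eq_measure_nu01)
  moreover have "measure nu01 (D \<inter> E) \<le> measure nu01 {0, 1/2::real}"
    by (rule nu.finite_measure_mono) (auto simp: D_def sets_nu01_iff)
  ultimately have "measure nu01 (D \<inter> E) = 0" by (simp add: measure_nonneg antisym)
  moreover have "measure nu01 D \<le> measure nu01 {0..1/2::real}"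
    by (rule nu.finite_measure_mono) (auto simp: D_def sets_nu01_iff)
  moreover have "measure nu01 {0..1/2::real} = 1/2" by (simp add: measure_nu01)
  moreover have "measure nu01 {x\<in>{0..1/2}. S (T x) \<in> {0..1/2}} \<le> measure nu01 (T -` D \<inter> {0..1})"
    using ST_half_subset D T_measurable unfolding D_def
    by (intro nu.finite_measure_mono) (auto simp: measurable_def)
  ultimately show ?thesis unfolding measure_vimage_T(2)[OF D] by simp
qed

end

section \<open>Discontinuity of composition\<close>

lemma squeezing_pair:
  assumes BB: "finite BB" "BB \<subseteq> sets nu01" and d: "d > 0"
  obtains S T where "S \<in> nonsing_aut nu01" "T \<in> nonsing_aut nu01"
    "measure nu01 (displacement nu01 S BB) < d" "measure nu01 (displacement nu01 T BB) < d"
    "measure nu01 {x\<in>{0..1/2}. S (T x) \<in> {0..1/2}} \<le> 1/4"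
proof -
  obtain N :: nat where N: "1 / d < real N" using reals_Archimedean2 by blast
  define K where "K = N + 2"
  have "1 < real N * d" using N d by (simp add: field_simps)
  then have K: "K \<ge> 2" "1 / real K < d" using d by (auto simp: K_def field_simps)
  define c where "c = d / (real (card BB) + 1)"
  define eta where "eta = c / ((real K + 3) / 2)"
  have c: "c > 0" "real (card BB) * c < d" using d by (auto simp: c_def field_simps)
  have eta: "eta > 0" "(real K + 3) / 2 * eta = c" using c by (auto simp: eta_def)
  obtain n G where n: "n \<ge> 1" and G: "\<And>B. B \<in> BB \<Longrightarrow> dyadic_invariant n (G B)"
    and mG: "\<And>B. B \<in> BB \<Longrightarrow> measure nu01 (sym_diff B (G B) \<inter> {0..1}) < eta"
    using dyadic_approximation_family[OF BB eta(1)] by metis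
  interpret dyadic_squeeze n K by standard (use n K in auto)
  have "measure nu01 (displacement nu01 T BB) \<le> (\<Sum>B\<in>BB. (real K + 3) / 2 * measure nu01 (sym_diff B (G B) \<inter> {0..1}))"
    by (rule measure_displacement_T_le[OF BB G])
  also have "\<dots> \<le> (\<Sum>B\<in>BB. c)"
  proof (rule sum_mono)
    fix B assume "B \<in> BB"
    then have "(real K + 3) / 2 * measure nu01 (sym_diff B (G B) \<inter> {0..1}) \<le> (real K + 3) / 2 * eta"
      using mG by (intro mult_left_mono) (auto intro: less_imp_le)
    then show "(real K + 3) / 2 * measure nu01 (sym_diff B (G B) \<inter> {0..1}) \<le> c" using eta(2) by (simp only:)
  qed
  also have "\<dots> < d" using c by simp
  finally have "measure nu01 (displacement nu01 T BB) < d" .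
  moreover have "measure nu01 (displacement nu01 S BB) < d"
    using measure_displacement_S_le[of BB] K by linarith
  ultimately show thesis using that[OF S_nonsing T_nonsing _ _ measure_ST_half_le] by blast
qed

theorem lemma6p1:
  shows "\<not> continuous_map
           (prod_topology (very_weak_topology nu01) (very_weak_topology nu01))
           (very_weak_topology nu01) (\<lambda>(S, T). S \<circ> T)"
proof
  assume cont: "continuous_map
           (prod_topology (very_weak_topology nu01) (very_weak_topology nu01))
           (very_weak_topology nu01) (\<lambda>(S, T). S \<circ> T)"
  define A :: "real set" where "A = {0..1/2}"
  have A: "A \<in> sets nu01" by (simp add: A_def sets_nu01_iff)
  note pair = nu.wot_functional_indicator[OF _ A]
  define V where "V = {R \<in> nonsing_aut nu01. wot_functional nu01 R (indicator A, indicator A) \<in> {1/4<..}}"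
  have "openin (very_weak_topology nu01) V"
    unfolding V_def using pair(1)[OF id_in_nonsing_aut] by (rule openin_very_weak_topology_vimage) simp
  moreover have "id \<in> V"
  proof -
    have "{x\<in>A. id x \<in> A} = A" by auto
    then have "wot_functional nu01 id (indicator A, indicator A) = measure nu01 A"
      using pair(2)[OF id_in_nonsing_aut] by (simp only:)
    moreover have "measure nu01 A = 1/2" by (simp add: A_def measure_nu01)
    ultimately show ?thesis by (simp add: V_def id_in_nonsing_aut)
  qed
  ultimately obtain BB d where BB: "finite BB" "BB \<subseteq> sets nu01" "d > 0"
    and near: "\<And>S T. S \<in> nonsing_aut nu01 \<Longrightarrow> T \<in> nonsing_aut nu01 \<Longrightarrow>
      measure nu01 (displacement nu01 S BB) < d \<Longrightarrow> measure nu01 (displacement nu01 T BB) < d \<Longrightarrow> S \<circ> T \<in> V"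
    using nu.continuous_compose_near_id[OF cont] by metis
  obtain S T where ST: "S \<in> nonsing_aut nu01" "T \<in> nonsing_aut nu01"
    "measure nu01 (displacement nu01 S BB) < d" "measure nu01 (displacement nu01 T BB) < d"
    and squeeze: "measure nu01 {x\<in>{0..1/2}. S (T x) \<in> {0..1/2}} \<le> 1/4"
    by (rule squeezing_pair[OF BB])
  from ST have "S \<circ> T \<in> V" by (rule near)
  then have "1/4 < wot_functional nu01 (S \<circ> T) (indicator A, indicator A)"
    and "S \<circ> T \<in> nonsing_aut nu01" by (simp_all add: V_def)
  then have "1/4 < measure nu01 {x\<in>A. (S \<circ> T) x \<in> A}" using pair(2) by simp
  then show False using squeeze by (simp add: A_def)
qed

end
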